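(* In the Fock representation, the $Q^+$-operator $Q^+(v)=\sum_{r\ge0}Q^+_rv^r$ is invertible (as a formal power series in $v$ with coefficients in $\mathrm{End}\,\mathcal F^n$) and $$Q^+(v)^{-1}=\sum_{r\ge0}v^r\det\big((-1)^{1-i+j}Q^+_{1-i+j}\big)_{1\le i,j\le r},$$ where $Q^+_s:=0$ for $s<0$ and $Q^+_0=1$. Moreover, for $r<n$ these coefficients simplify to $\det\big((-1)^{1-i+j}Q^+_{1-i+j}\big)_{1\le i,j\le r}=q^{-2r}Q^-_r$.
   Context: $q$ is an indeterminate, $n\ge1$, $z$ a parameter, $(q^2)_m=\prod_{j=1}^m(1-q^{2j})$. Fock space $\mathcal F^n$: basis $|\lambda\rangle$ indexed by partitions with at most $n$ parts, $m_j(\lambda)=\lambda_j-\lambda_{j+1}$ ($\lambda_{n+1}=0$) particles at site $j$; $\beta_j^*$ adds a particle at site $j$ with factor $(1-q^{2m_j(\lambda)+2})$, $\beta_j$ removes a particle at site $j$ (giving $0$ if none), $q^{N_j}|\lambda\rangle=q^{m_j(\lambda)}|\lambda\rangle$. The commuting operators $Q^\pm_r$ are $$Q^+_r=(-1)^r\sum_{\alpha}z^{\alpha_n}\frac{(\beta_1^* )^{\alpha_n}(\beta_1\beta_2^* )^{\alpha_1}\cdots(\beta_{n-1}\beta_n^* )^{\alpha_{n-1}}\beta_n^{\alpha_n}}{(q^2)_{\alpha_1}\cdots(q^2)_{\alpha_n}},\quad Q^-_r=\sum_{\alpha}z^{\alpha_n}\frac{\beta_n^{\alpha_n}(\beta_{n-1}\beta_n^*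 )^{\alpha_{n-1}}\cdots(\beta_1\beta_2^* )^{\alpha_1}(\beta_1^* )^{\alpha_n}}{(q^2)_{\alpha_1}\cdots(q^2)_{\alpha_n}}\prod_{i=1}^nq^{\alpha_i(\alpha_i+1)},$$ sums over compositions $\alpha\in\mathbb Z^n_{\ge0}$ of $r$. *)

theory Defs
  imports "HOL-Combinatorics.Permutations"
begin

text \<open>Basis states of the Fock space: occupation vectors m, where m j is the
number of particles at site j (1 \<le> j \<le> n).  A partition with at most n parts
corresponds to m j = lambda_j - lambda_(j+1); this is a bijection.\<close>

type_synonym state = "nat \<Rightarrow> nat"
type_synonym 'a vect = "state \<Rightarrow> 'a"
text \<open>An operator is given by its action on basis vectors:
  A m mu = coefficient of |mu> in A|m>.\<close>
type_synonym 'a oper = "state \<Rightarrow> 'a vect"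

definition fock :: "nat \<Rightarrow> state set" where
  "fock n = {m. m 0 = 0 \<and> (\<forall>j>n. m j = 0)}"

definition vsupp :: "'a::zero vect \<Rightarrow> state set" where
  "vsupp v = {mu. v mu \<noteq> 0}"

definition apply_op :: "'a::comm_ring_1 oper \<Rightarrow> 'a vect \<Rightarrow> 'a vect" where
  "apply_op A v = (\<lambda>mu. \<Sum>nu\<in>vsupp v. v nu * A nu mu)"

definition comp_op :: "'a::comm_ring_1 oper \<Rightarrow> 'a oper \<Rightarrow> 'a oper" where
  "comp_op A B = (\<lambda>m. apply_op A (B m))"

definition id_op :: "'a::comm_ring_1 oper" where
  "id_op = (\<lambda>m mu. if mu = m then 1 else 0)"

definition zero_op :: "'a::comm_ring_1 oper" where
  "zero_op = (\<lambda>m mu. 0)"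

definition scale_op :: "'a::comm_ring_1 \<Rightarrow> 'a oper \<Rightarrow> 'a oper" where
  "scale_op c A = (\<lambda>m mu. c * A m mu)"

primrec pow_op :: "'a::comm_ring_1 oper \<Rightarrow> nat \<Rightarrow> 'a oper" where
  "pow_op A 0 = id_op"
| "pow_op A (Suc k) = comp_op A (pow_op A k)"

definition prod_op :: "(nat \<Rightarrow> 'a::comm_ring_1 oper) \<Rightarrow> nat list \<Rightarrow> 'a oper" where
  "prod_op F is = foldr (\<lambda>i acc. comp_op (F i) acc) is id_op"

definition bstar :: "'a::comm_ring_1 \<Rightarrow> nat \<Rightarrow> 'a oper" where
  "bstar q j = (\<lambda>m mu. if mu = m(j := Suc (m j)) then 1 - q ^ (2 * m j + 2) else 0)"

definition bann :: "nat \<Rightarrow> 'a::comm_ring_1 oper" where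
  "bann j = (\<lambda>m mu. if 0 < m j \<and> mu = m(j := m j - 1) then 1 else 0)"

definition qpoch :: "'a::comm_ring_1 \<Rightarrow> nat \<Rightarrow> 'a" where
  "qpoch q m = (\<Prod>j=1..m. 1 - q ^ (2 * j))"

definition comps :: "nat \<Rightarrow> nat \<Rightarrow> (nat \<Rightarrow> nat) set" where
  "comps n r = {\<alpha>. (\<forall>i. (i = 0 \<or> n < i) \<longrightarrow> \<alpha> i = 0) \<and> (\<Sum>i=1..n. \<alpha> i) = r}"

definition Qplus :: "nat \<Rightarrow> 'a::field \<Rightarrow> 'a \<Rightarrow> nat \<Rightarrow> 'a oper" where
  "Qplus n q z r = (\<lambda>m mu. (-1) ^ r * (\<Sum>\<alpha>\<in>comps n r.
      z ^ \<alpha> n / (\<Prod>i=1..n. qpoch q (\<alpha> i)) *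
      comp_op (pow_op (bstar q 1) (\<alpha> n))
        (comp_op (prod_op (\<lambda>i. pow_op (comp_op (bann i) (bstar q (Suc i))) (\<alpha> i)) [1..<n])
           (pow_op (bann n) (\<alpha> n))) m mu))"

definition Qminus :: "nat \<Rightarrow> 'a::field \<Rightarrow> 'a \<Rightarrow> nat \<Rightarrow> 'a oper" where
  "Qminus n q z r = (\<lambda>m mu. (\<Sum>\<alpha>\<in>comps n r.
      z ^ \<alpha> n / (\<Prod>i=1..n. qpoch q (\<alpha> i)) * (\<Prod>i=1..n. q ^ (\<alpha> i * (\<alpha> i + 1))) *
      comp_op (pow_op (bann n) (\<alpha> n))
        (comp_op (prod_op (\<lambda>i. pow_op (comp_op (bann i) (bstar q (Suc i))) (\<alpha> i)) (rev [1..<n]))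
           (pow_op (bstar q 1) (\<alpha> n))) m mu))"

definition Qplus_int :: "nat \<Rightarrow> 'a::field \<Rightarrow> 'a \<Rightarrow> int \<Rightarrow> 'a oper" where
  "Qplus_int n q z s = (if s < 0 then zero_op else Qplus n q z (nat s))"

text \<open>Leibniz determinant of an r x r matrix E (indices 1..r) with entries in
End F^n, products taken in row order (entries here commute).\<close>
definition det_op :: "nat \<Rightarrow> (nat \<Rightarrow> nat \<Rightarrow> 'a::comm_ring_1 oper) \<Rightarrow> 'a oper" where
  "det_op r E = (\<lambda>m mu. \<Sum>\<sigma>\<in>{\<sigma>. \<sigma> permutes {1..r}}.
      of_int (sign \<sigma>) * prod_op (\<lambda>i. E i (\<sigma> i)) [1..<Suc r] m mu)"

definition Dcoef :: "nat \<Rightarrow> 'a::field \<Rightarrow> 'a \<Rightarrow> nat \<Rightarrow> 'a oper" where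
  "Dcoef n q z r = det_op r (\<lambda>i j. let s = 1 - int i + int j in
      scale_op ((-1) ^ nat s) (Qplus_int n q z s))"

text \<open>Coefficient of v^r in the product of two formal power series in v
with coefficients in End F^n.\<close>
definition conv_op :: "(nat \<Rightarrow> 'a::comm_ring_1 oper) \<Rightarrow> (nat \<Rightarrow> 'a oper) \<Rightarrow> nat \<Rightarrow> 'a oper" where
  "conv_op A B r = (\<lambda>m mu. \<Sum>k=0..r. comp_op (A k) (B (r - k)) m mu)"

end

theory Submission
  imports Defs
begin

text \<open>
Every summand of \<open>Q\<^sup>\<pm>\<^sub>r\<close> is a monomial operator: it moves \<open>\<alpha>\<^sub>i\<close> particles from each site \<open>i\<close> to
the cyclically next site and multiplies by a scalar, so all identities reduce to identities between
scalar coefficients.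

The matrix \<open>(Q\<^sup>+\<^sub>1\<^sub>-\<^sub>i\<^sub>+\<^sub>j)\<close> is upper Hessenberg with ones on the subdiagonal.  Expanding its
determinant \<open>D\<^sub>r\<close> along the first column gives \<open>D\<^sub>r = - \<Sum>\<^sub>k\<^sub>\<ge>\<^sub>1 Q\<^sup>+\<^sub>k D\<^sub>r\<^sub>-\<^sub>k\<close>, i.e. \<open>D\<close> is a
right inverse of \<open>Q\<^sup>+\<close>; since \<open>Q\<^sup>+\<^sub>0 = 1\<close> it is also a left inverse.

By the same recursion, the second claim amounts to \<open>\<Sum>\<^sub>k q\<^sup>2\<^sup>k Q\<^sup>+\<^sub>k Q\<^sup>-\<^sub>r\<^sub>-\<^sub>k = 0\<close> for
\<open>0 < r < n\<close>.  Group its terms by the total displacement \<open>\<gamma>\<close>, a composition of \<open>r\<close> into \<open>n\<close>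
parts.  As \<open>r < n\<close>, some site \<open>i\<close> has \<open>\<gamma>\<^sub>i > 0\<close> while the next site has \<open>\<gamma> = 0\<close>; then the
share \<open>\<alpha>\<^sub>i\<close> of \<open>\<gamma>\<^sub>i\<close> moved by \<open>Q\<^sup>+\<close> enters only through one scalar factor, whose sum over
\<open>\<alpha>\<^sub>i = 0..\<gamma>\<^sub>i\<close> vanishes by a q-binomial identity.
\<close>

subsection \<open>Operators given by matrices\<close>

definition column_finite :: "'a::comm_ring_1 oper \<Rightarrow> bool" where
  "column_finite A \<longleftrightarrow> (\<forall>m. finite (vsupp (A m)))"

definition mono_op :: "(state \<Rightarrow> state) \<Rightarrow> (state \<Rightarrow> 'a) \<Rightarrow> 'a::comm_ring_1 oper" where
  "mono_op s c = (\<lambda>m mu. if mu = s m then c m else 0)"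

lemma apply_op_eq_sum_superset:
  assumes "finite F" "vsupp v \<subseteq> F"
  shows "apply_op A v mu = (\<Sum>nu\<in>F. v nu * A nu mu)"
  unfolding apply_op_def
  by (rule sum.mono_neutral_left) (use assms in \<open>auto simp: vsupp_def\<close>)

lemma apply_op_single: "apply_op A (\<lambda>mu. if mu = t then c else 0) mu0 = c * A t mu0"
  by (subst apply_op_eq_sum_superset[of "{t}"]) (auto simp: vsupp_def)

lemma apply_op_scale:
  fixes c :: "'a::field"
  shows "apply_op A (\<lambda>mu. c * v mu) mu0 = c * apply_op A v mu0"
proof (cases "c = 0")
  case False
  then have "vsupp (\<lambda>mu. c * v mu) = vsupp v" by (auto simp: vsupp_def)
  then show ?thesis by (simp add: apply_op_def sum_distrib_left mult.assoc)
qed (simp add: apply_op_def vsupp_def)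

lemma vsupp_lincomb_subset:
  fixes c :: "_ \<Rightarrow> 'a::comm_ring_1"
  shows "vsupp (\<lambda>mu. \<Sum>x\<in>X. c x * v x mu) \<subseteq> (\<Union>x\<in>X. vsupp (v x))"
proof
  fix mu assume "mu \<in> vsupp (\<lambda>mu. \<Sum>x\<in>X. c x * v x mu)"
  then have "(\<Sum>x\<in>X. c x * v x mu) \<noteq> 0" by (simp add: vsupp_def)
  then obtain x where "x \<in> X" "c x * v x mu \<noteq> 0" by (meson sum.neutral)
  then have "v x mu \<noteq> 0" by auto
  with \<open>x \<in> X\<close> show "mu \<in> (\<Union>x\<in>X. vsupp (v x))" by (auto simp: vsupp_def)
qed

lemma apply_op_lincomb:
  assumes "finite X" "\<And>x. x \<in> X \<Longrightarrow> finite (vsupp (v x))"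
  shows "apply_op A (\<lambda>mu. \<Sum>x\<in>X. c x * v x mu) mu0 = (\<Sum>x\<in>X. c x * apply_op A (v x) mu0)"
proof -
  define F where "F = (\<Union>x\<in>X. vsupp (v x))"
  have F: "finite F" using assms by (simp add: F_def)
  have "apply_op A (\<lambda>mu. \<Sum>x\<in>X. c x * v x mu) mu0 = (\<Sum>nu\<in>F. (\<Sum>x\<in>X. c x * v x nu) * A nu mu0)"
    using F vsupp_lincomb_subset unfolding F_def by (rule apply_op_eq_sum_superset)
  also have "\<dots> = (\<Sum>x\<in>X. c x * (\<Sum>nu\<in>F. v x nu * A nu mu0))"
    by (simp add: sum_distrib_left sum_distrib_right mult.assoc sum.swap[of _ F])
  also have "\<dots> = (\<Sum>x\<in>X. c x * apply_op A (v x) mu0)"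
    by (rule sum.cong[OF refl]) (subst apply_op_eq_sum_superset[OF F], auto simp: F_def)
  finally show ?thesis .
qed

lemma apply_op_lincomb_op:
  "apply_op (\<lambda>m mu. \<Sum>x\<in>X. c x * F x m mu) v mu0 = (\<Sum>x\<in>X. c x * apply_op (F x) v mu0)"
  unfolding apply_op_def by (simp add: sum_distrib_left sum.swap[of _ X] mult.left_commute)

lemma apply_op_id: "finite (vsupp v) \<Longrightarrow> apply_op id_op v = v"
  by (rule ext, subst apply_op_eq_sum_superset[of "insert _ (vsupp v)"])
    (auto simp: id_op_def if_distrib cong: if_cong)

lemma finite_vsupp_apply_op:
  assumes "finite (vsupp v)" "column_finite A"
  shows "finite (vsupp (apply_op A v))"
proof -
  have "vsupp (apply_op A v) \<subseteq> (\<Union>nu\<in>vsupp v. vsupp (A nu))"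
    using vsupp_lincomb_subset[of v A "vsupp v"] by (simp add: apply_op_def)
  then show ?thesis using assms by (auto simp: column_finite_def intro: finite_subset)
qed

lemma comp_op_mono_op: "comp_op A (mono_op s c) m mu = c m * A (s m) mu"
  unfolding comp_op_def mono_op_def by (simp add: apply_op_single)

lemma mono_op_comp_mono_op:
  "comp_op (mono_op s1 c1) (mono_op s2 c2) = mono_op (s1 \<circ> s2) (\<lambda>m. c2 m * c1 (s2 m))"
  by (intro ext, subst comp_op_mono_op) (simp add: mono_op_def)

lemma mono_op_cong: "(\<And>m. s m = s' m) \<Longrightarrow> (\<And>m. c m = c' m) \<Longrightarrow> mono_op s c = mono_op s' c'"
  by (rule arg_cong2[where f=mono_op]) auto

lemma id_op_eq_mono_op: "id_op = mono_op id (\<lambda>_. 1)"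
  by (auto simp: fun_eq_iff id_op_def mono_op_def)

lemma comp_op_id_right: "comp_op A id_op = A"
  by (simp add: fun_eq_iff id_op_eq_mono_op comp_op_mono_op)

lemma comp_op_id_left: "column_finite A \<Longrightarrow> comp_op id_op A = A"
  by (simp add: fun_eq_iff comp_op_def apply_op_id column_finite_def)

lemma zero_op_apply [simp]: "zero_op m mu = 0"
  by (simp add: zero_op_def)

lemma comp_op_zero_left: "comp_op zero_op A = zero_op"
  by (simp add: fun_eq_iff comp_op_def apply_op_def zero_op_def)

lemma comp_op_zero_right: "comp_op A zero_op = zero_op"
  by (simp add: fun_eq_iff comp_op_def apply_op_def zero_op_def vsupp_def)

lemma comp_op_scale_left: "comp_op (scale_op c A) B m mu = c * comp_op A B m mu"
  by (simp add: comp_op_def apply_op_def scale_op_def sum_distrib_left mult.left_commute)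

lemma comp_op_scale_right: "comp_op (A::'a::field oper) (scale_op c B) m mu = c * comp_op A B m mu"
  by (simp add: comp_op_def scale_op_def apply_op_scale)

lemma comp_op_lincomb_right:
  assumes "finite X" "\<And>x. x \<in> X \<Longrightarrow> column_finite (F x)"
  shows "comp_op A (\<lambda>m mu. \<Sum>x\<in>X. c x * F x m mu) m mu = (\<Sum>x\<in>X. c x * comp_op A (F x) m mu)"
  unfolding comp_op_def by (rule apply_op_lincomb) (use assms in \<open>auto simp: column_finite_def\<close>)

lemma comp_op_sum_right:
  assumes "finite X" "\<And>x. x \<in> X \<Longrightarrow> column_finite (F x)"
  shows "comp_op A (\<lambda>m mu. \<Sum>x\<in>X. F x m mu) m mu = (\<Sum>x\<in>X. comp_op A (F x) m mu)"
  using comp_op_lincomb_right[OF assms, where c="\<lambda>_. 1"] by simp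

lemma comp_op_sum_left:
  "comp_op (\<lambda>m mu. \<Sum>x\<in>X. F x m mu) B m mu = (\<Sum>x\<in>X. comp_op (F x) B m mu)"
  using apply_op_lincomb_op[where c="\<lambda>_. 1"] by (simp add: comp_op_def)

lemma comp_op_assoc:
  assumes "column_finite B" "column_finite C"
  shows "comp_op (comp_op A B) C = comp_op A (comp_op B C)"
proof (intro ext)
  fix m mu
  have "comp_op A (comp_op B C) m mu = apply_op A (\<lambda>w. \<Sum>nu\<in>vsupp (C m). C m nu * B nu w) mu"
    unfolding comp_op_def apply_op_def[of B "C m"] ..
  also have "\<dots> = (\<Sum>nu\<in>vsupp (C m). C m nu * apply_op A (B nu) mu)"
    by (rule apply_op_lincomb) (use assms in \<open>auto simp: column_finite_def\<close>)
  also have "\<dots> = comp_op (comp_op A B) C m mu"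
    unfolding comp_op_def apply_op_def[of "\<lambda>m. apply_op A (B m)" "C m"] ..
  finally show "comp_op (comp_op A B) C m mu = comp_op A (comp_op B C) m mu" ..
qed

lemma comp_op_assoc_mono_op:
  fixes A :: "'a::field oper"
  shows "comp_op (comp_op A B) (mono_op s c) = comp_op A (comp_op B (mono_op s c))"
proof (intro ext)
  fix m mu
  have eq: "comp_op B (mono_op s c) m = (\<lambda>mu. c m * B (s m) mu)"
    by (rule ext) (simp add: comp_op_mono_op)
  have "comp_op (comp_op A B) (mono_op s c) m mu = c m * apply_op A (B (s m)) mu"
    unfolding comp_op_mono_op by (simp add: comp_op_def)
  also have "\<dots> = comp_op A (comp_op B (mono_op s c)) m mu"
    by (simp only: comp_op_def[of A] eq apply_op_scale)
  finally show "comp_op (comp_op A B) (mono_op s c) m mu = comp_op A (comp_op B (mono_op s c)) m mu" .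
qed

lemma column_finite_comp_op: "column_finite A \<Longrightarrow> column_finite B \<Longrightarrow> column_finite (comp_op A B)"
  by (simp add: column_finite_def comp_op_def finite_vsupp_apply_op)

lemma column_finite_zero_op: "column_finite zero_op"
  by (simp add: column_finite_def zero_op_def vsupp_def)

lemma column_finite_id_op: "column_finite id_op"
  by (simp add: column_finite_def id_op_def vsupp_def)

lemma column_finite_mono_op: "column_finite (mono_op s c)"
proof -
  have "vsupp (mono_op s c m) \<subseteq> {s m}" for m by (auto simp: mono_op_def vsupp_def)
  then show ?thesis by (auto simp: column_finite_def intro: finite_subset)
qed

lemma column_finite_scale_op: "column_finite A \<Longrightarrow> column_finite (scale_op c A)"
proof -
  have "vsupp (scale_op c A m) \<subseteq> vsupp (A m)" for m by (auto simp: scale_op_def vsupp_def)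
  then show "column_finite A \<Longrightarrow> column_finite (scale_op c A)"
    by (auto simp: column_finite_def intro: finite_subset)
qed

lemma column_finite_lincomb:
  assumes "finite X" "\<And>x. x \<in> X \<Longrightarrow> column_finite (F x)"
  shows "column_finite (\<lambda>m mu. \<Sum>x\<in>X. c x * F x m mu)"
  unfolding column_finite_def
  by (rule allI, rule finite_subset[OF vsupp_lincomb_subset]) (use assms in \<open>auto simp: column_finite_def\<close>)

lemma column_finite_sum:
  "finite X \<Longrightarrow> (\<And>x. x \<in> X \<Longrightarrow> column_finite (F x)) \<Longrightarrow> column_finite (\<lambda>m mu. \<Sum>x\<in>X. F x m mu)"
  using column_finite_lincomb[of X F "\<lambda>_. 1"] by simp

lemma prod_op_Nil [simp]: "prod_op F [] = id_op"
  by (simp add: prod_op_def)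

lemma prod_op_Cons [simp]: "prod_op F (x # xs) = comp_op (F x) (prod_op F xs)"
  by (simp add: prod_op_def)

lemma column_finite_prod_op:
  "(\<And>x. x \<in> set xs \<Longrightarrow> column_finite (F x)) \<Longrightarrow> column_finite (prod_op F xs)"
  by (induction xs) (auto simp: column_finite_id_op column_finite_comp_op)

lemma prod_op_cong: "(\<And>x. x \<in> set xs \<Longrightarrow> F x = G x) \<Longrightarrow> prod_op F xs = prod_op G xs"
  by (induction xs) auto

lemma prod_op_eq_zero: "x \<in> set xs \<Longrightarrow> F x = zero_op \<Longrightarrow> prod_op F xs = zero_op"
  by (induction xs) (auto simp: comp_op_zero_left comp_op_zero_right)


subsection \<open>Monomial normal forms of the summands of \<open>Q\<^sup>\<pm>\<close>\<close>

definition bstar_coeff :: "'a::comm_ring_1 \<Rightarrow> nat \<Rightarrow> nat \<Rightarrow> 'a" where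
  "bstar_coeff q x k = (\<Prod>t<k. 1 - q ^ (2 * (x + t) + 2))"

definition cyc_pred :: "nat \<Rightarrow> nat \<Rightarrow> nat" where
  "cyc_pred n i = (if i = 1 then n else i - 1)"

definition cyc_succ :: "nat \<Rightarrow> nat \<Rightarrow> nat" where
  "cyc_succ n i = (if i = n then 1 else Suc i)"

lemma cyc_pred_1 [simp]: "cyc_pred n (Suc 0) = n"
  by (simp add: cyc_pred_def)

lemma cyc_pred_Suc [simp]: "0 < i \<Longrightarrow> cyc_pred n (Suc i) = i"
  by (simp add: cyc_pred_def)

lemma cyc_pred_cyc_succ: "1 \<le> i \<Longrightarrow> i \<le> n \<Longrightarrow> cyc_pred n (cyc_succ n i) = i"
  by (auto simp: cyc_succ_def cyc_pred_def)

lemma cyc_succ_in: "1 \<le> i \<Longrightarrow> i \<le> n \<Longrightarrow> cyc_succ n i \<in> {1..n}"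
  by (auto simp: cyc_succ_def)

lemma cyc_pred_eq_iff:
  assumes "j \<in> {1..n}" "i \<in> {1..n}"
  shows "cyc_pred n j = i \<longleftrightarrow> j = cyc_succ n i"
  using assms by (auto simp: cyc_pred_def cyc_succ_def)

lemma bstar_eq_mono_op: "bstar q j = mono_op (\<lambda>m. m(j := Suc (m j))) (\<lambda>m. 1 - q ^ (2 * m j + 2))"
  by (intro ext) (simp add: bstar_def mono_op_def)

lemma bann_eq_mono_op: "bann j = mono_op (\<lambda>m. m(j := m j - 1)) (\<lambda>m. if 0 < m j then 1 else 0)"
  by (intro ext) (auto simp: bann_def mono_op_def)

lemma bann_power: "pow_op (bann j) k = mono_op (\<lambda>m. m(j := m j - k)) (\<lambda>m. if k \<le> m j then 1 else 0)"
proof (induction k)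
  case 0 then show ?case by (simp add: id_op_eq_mono_op) (rule mono_op_cong, auto)
next
  case (Suc k) then show ?case
    by (simp add: mono_op_comp_mono_op bann_eq_mono_op) (rule mono_op_cong, auto)
qed

lemma bstar_power: "pow_op (bstar q j) k = mono_op (\<lambda>m. m(j := m j + k)) (\<lambda>m. bstar_coeff q (m j) k)"
proof (induction k)
  case 0 then show ?case by (simp add: id_op_eq_mono_op bstar_coeff_def) (rule mono_op_cong, auto)
next
  case (Suc k) then show ?case
    by (simp add: mono_op_comp_mono_op bstar_eq_mono_op) (rule mono_op_cong, auto simp: bstar_coeff_def)
qed

lemma hop_power:
  "pow_op (comp_op (bann i) (bstar q (Suc i))) k =
     mono_op (\<lambda>m. m(i := m i - k, Suc i := m (Suc i) + k))
       (\<lambda>m. (if k \<le> m i then 1 else 0) * bstar_coeff q (m (Suc i)) k)"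
proof (induction k)
  case 0 then show ?case by (simp add: id_op_eq_mono_op bstar_coeff_def) (rule mono_op_cong, auto)
next
  case (Suc k)
  have hop: "comp_op (bann i) (bstar q (Suc i)) =
      mono_op (\<lambda>m. m(Suc i := Suc (m (Suc i)), i := m i - 1))
        (\<lambda>m. (1 - q ^ (2 * m (Suc i) + 2)) * (if 0 < m i then 1 else 0))"
    by (simp add: mono_op_comp_mono_op bstar_eq_mono_op bann_eq_mono_op) (rule mono_op_cong, auto)
  show ?case
    unfolding pow_op.simps(2) Suc.IH unfolding hop mono_op_comp_mono_op
    by (rule mono_op_cong) (auto simp: bstar_coeff_def)
qed

abbreviation hops :: "'a::field \<Rightarrow> (nat \<Rightarrow> nat) \<Rightarrow> nat \<Rightarrow> 'a oper" where
  "hops q \<alpha> \<equiv> (\<lambda>i. pow_op (comp_op (bann i) (bstar q (Suc i))) (\<alpha> i))"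

definition Qplus_shift :: "nat \<Rightarrow> (nat \<Rightarrow> nat) \<Rightarrow> state \<Rightarrow> state" where
  "Qplus_shift n \<alpha> m = (\<lambda>i. if 1 \<le> i \<and> i \<le> n then m i - \<alpha> i + \<alpha> (cyc_pred n i) else m i)"

definition Qplus_coeff :: "'a::comm_ring_1 \<Rightarrow> nat \<Rightarrow> (nat \<Rightarrow> nat) \<Rightarrow> state \<Rightarrow> 'a" where
  "Qplus_coeff q n \<alpha> m =
     (\<Prod>i\<in>{1..n}. (if \<alpha> i \<le> m i then 1 else 0) * bstar_coeff q (m i - \<alpha> i) (\<alpha> (cyc_pred n i)))"

definition Qminus_shift :: "nat \<Rightarrow> (nat \<Rightarrow> nat) \<Rightarrow> state \<Rightarrow> state" where
  "Qminus_shift n \<alpha> m = (\<lambda>i. if 1 \<le> i \<and> i \<le> n then m i + \<alpha> (cyc_pred n i) - \<alpha> i else m i)"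

definition Qminus_coeff :: "'a::comm_ring_1 \<Rightarrow> nat \<Rightarrow> (nat \<Rightarrow> nat) \<Rightarrow> state \<Rightarrow> 'a" where
  "Qminus_coeff q n \<alpha> m =
     (\<Prod>i\<in>{1..n}. (if \<alpha> i \<le> m i + \<alpha> (cyc_pred n i) then 1 else 0) * bstar_coeff q (m i) (\<alpha> (cyc_pred n i)))"

lemma prod_cyc_pred_split:
  assumes "1 \<le> n"
  shows "(\<Prod>i\<in>{1..n}. g i (\<alpha> (cyc_pred n i))) = g 1 (\<alpha> n) * (\<Prod>i\<in>{1..<n}. g (Suc i) (\<alpha> i))"
proof -
  have "(\<Prod>i\<in>{Suc 1..<Suc n}. g i (\<alpha> (cyc_pred n i))) = (\<Prod>i\<in>{1..<n}. g (Suc i) (\<alpha> i))"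
    by (subst image_Suc_atLeastLessThan[symmetric], subst prod.reindex) auto
  moreover have "{1..n} = insert 1 {Suc 1..<Suc n}" using assms by auto
  ultimately show ?thesis by simp
qed

lemma prod_atLeastAtMost_split_last:
  fixes n :: nat
  shows "1 \<le> n \<Longrightarrow> (\<Prod>i\<in>{1..n}. f i) = (\<Prod>i\<in>{1..<n}. f i) * (f n :: 'a::comm_monoid_mult)"
proof -
  assume "1 \<le> n"
  then have "{1..n} = insert n {1..<n}" by auto
  then show ?thesis by (simp add: mult.commute)
qed

lemma hops_bann_eq_mono_op:
  fixes q :: "'a::field"
  assumes "j \<le> n"
  shows "comp_op (prod_op (hops q \<alpha>) [j..<n]) (pow_op (bann n) (\<alpha> n)) = mono_op
      (\<lambda>m i. if j \<le> i \<and> i \<le> n then m i - \<alpha> i + (if j < i then \<alpha> (i - 1) else 0) else m i)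
      (\<lambda>m. (if \<alpha> n \<le> m n then 1 else 0) *
        (\<Prod>i\<in>{j..<n}. (if \<alpha> i \<le> m i then 1 else 0) * bstar_coeff q (m (Suc i) - \<alpha> (Suc i)) (\<alpha> i)))"
  using assms
proof (induction j rule: inc_induct)
  case base
  show ?case
    by (simp add: bann_power id_op_eq_mono_op mono_op_comp_mono_op) (rule mono_op_cong, auto)
next
  case (step j)
  have split: "comp_op (prod_op (hops q \<alpha>) [j..<n]) (pow_op (bann n) (\<alpha> n))
      = comp_op (hops q \<alpha> j) (comp_op (prod_op (hops q \<alpha>) [Suc j..<n]) (pow_op (bann n) (\<alpha> n)))"
    by (simp only: upt_conv_Cons[OF step.hyps(2)] prod_op_Cons bann_power comp_op_assoc_mono_op)
  have ivl: "{j..<n} = insert j {Suc j..<n}" using step.hyps by auto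
  show ?case
    unfolding split unfolding step.IH unfolding hop_power mono_op_comp_mono_op
    by (rule mono_op_cong) (use step.hyps in \<open>auto simp: ivl mult_ac fun_eq_iff\<close>)
qed

lemma Qplus_summand_eq_mono_op:
  fixes q :: "'a::field"
  assumes n: "1 \<le> n"
  shows "comp_op (pow_op (bstar q 1) (\<alpha> n)) (comp_op (prod_op (hops q \<alpha>) [1..<n]) (pow_op (bann n) (\<alpha> n)))
     = mono_op (Qplus_shift n \<alpha>) (Qplus_coeff q n \<alpha>)"
  unfolding hops_bann_eq_mono_op[OF n] bstar_power mono_op_comp_mono_op
  apply (rule mono_op_cong)
  subgoal using n by (auto simp: Qplus_shift_def fun_eq_iff cyc_pred_def)
  subgoal for m
    unfolding Qplus_coeff_def prod.distrib
      prod_cyc_pred_split[OF n, of "\<lambda>i b. bstar_coeff q (m i - \<alpha> i) b"]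
      prod_atLeastAtMost_split_last[OF n, of "\<lambda>i. if \<alpha> i \<le> m i then 1 else 0"]
    using n by (simp add: mult_ac)
  done

lemma hops_bstar_eq_mono_op:
  fixes q :: "'a::field"
  assumes "1 \<le> j" "j \<le> n"
  shows "comp_op (prod_op (hops q \<alpha>) (rev [1..<j])) (pow_op (bstar q 1) (\<alpha> n)) = mono_op
      (\<lambda>m i. if 1 \<le> i \<and> i < j then m i + \<alpha> (cyc_pred n i) - \<alpha> i
        else if i = j then m j + \<alpha> (cyc_pred n j) else m i)
      (\<lambda>m. bstar_coeff q (m 1) (\<alpha> n) * (\<Prod>i\<in>{1..<j}.
        (if \<alpha> i \<le> m i + \<alpha> (cyc_pred n i) then 1 else 0) * bstar_coeff q (m (Suc i)) (\<alpha> i)))"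
  using assms
proof (induction j rule: nat_induct_at_least)
  case base
  show ?case
    by (simp add: bstar_power id_op_eq_mono_op mono_op_comp_mono_op) (rule mono_op_cong, auto)
next
  case (Suc j)
  have split: "comp_op (prod_op (hops q \<alpha>) (rev [1..<Suc j])) (pow_op (bstar q 1) (\<alpha> n))
      = comp_op (hops q \<alpha> j) (comp_op (prod_op (hops q \<alpha>) (rev [1..<j])) (pow_op (bstar q 1) (\<alpha> n)))"
    using Suc.hyps by (simp add: bstar_power comp_op_assoc_mono_op)
  show ?case
    unfolding split unfolding Suc.IH[OF Suc_leD[OF Suc.prems]] unfolding hop_power mono_op_comp_mono_op
    by (rule mono_op_cong) (use Suc in \<open>auto simp: mult_ac fun_eq_iff\<close>)
qed

lemma Qminus_summand_eq_mono_op: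
  fixes q :: "'a::field"
  assumes n: "1 \<le> n"
  shows "comp_op (pow_op (bann n) (\<alpha> n)) (comp_op (prod_op (hops q \<alpha>) (rev [1..<n])) (pow_op (bstar q 1) (\<alpha> n)))
     = mono_op (Qminus_shift n \<alpha>) (Qminus_coeff q n \<alpha>)"
  unfolding hops_bstar_eq_mono_op[OF n order_refl] bann_power mono_op_comp_mono_op
  apply (rule mono_op_cong)
  subgoal using n by (auto simp: Qminus_shift_def fun_eq_iff)
  subgoal for m
    unfolding Qminus_coeff_def prod.distrib
      prod_cyc_pred_split[OF n, of "\<lambda>i b. bstar_coeff q (m i) b"]
      prod_atLeastAtMost_split_last[OF n, of "\<lambda>i. if \<alpha> i \<le> m i + \<alpha> (cyc_pred n i) then 1 else 0"]
    using n by (simp add: mult_ac)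
  done

subsection \<open>Hessenberg determinants\<close>

text \<open>\<open>hess_det e a r t\<close> is the determinant of \<open>(e (1 - i + j))\<close> on the indices \<open>a..<a + r\<close>,
except that the first row has the symbol shifted by \<open>t\<close>; allowing this shift is what makes the
expansion along the first column close up.\<close>

definition hess_entry :: "(int \<Rightarrow> 'a::comm_ring_1 oper) \<Rightarrow> int \<Rightarrow> nat \<Rightarrow> nat \<Rightarrow> nat \<Rightarrow> 'a oper" where
  "hess_entry e t a i j = e (1 - int i + int j + (if i = a then t else 0))"

definition hess_term :: "(int \<Rightarrow> 'a::comm_ring_1 oper) \<Rightarrow> int \<Rightarrow> nat \<Rightarrow> nat \<Rightarrow> (nat \<Rightarrow> nat) \<Rightarrow> 'a oper" where
  "hess_term e t a r \<sigma> = (\<lambda>m mu. of_int (sign \<sigma>) * prod_op (\<lambda>i. hess_entry e t a i (\<sigma> i)) [a..<a+r] m mu)"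

definition hess_det :: "(int \<Rightarrow> 'a::comm_ring_1 oper) \<Rightarrow> nat \<Rightarrow> nat \<Rightarrow> int \<Rightarrow> 'a oper" where
  "hess_det e a r t = (\<lambda>m mu. \<Sum>\<sigma>\<in>{\<sigma>. \<sigma> permutes {a..<a+r}}. hess_term e t a r \<sigma> m mu)"

lemma permutes_fixing_iff:
  "(\<sigma> permutes S \<and> \<sigma> a = a) \<longleftrightarrow> \<sigma> permutes (S - {a})"
  by (auto simp: permutes_def)

locale hessenberg_symbol =
  fixes e :: "int \<Rightarrow> 'a::field oper"
  assumes e_neg: "\<And>s. s < 0 \<Longrightarrow> e s = zero_op"
    and e_0: "e 0 = id_op"
    and column_finite_e: "\<And>s. column_finite (e s)"
begin

lemma column_finite_prod_hess_entry: "column_finite (prod_op (\<lambda>i. hess_entry e t a i (\<sigma> i)) is)"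
  by (auto intro!: column_finite_prod_op simp: hess_entry_def column_finite_e)

lemma column_finite_hess_det: "column_finite (hess_det e a r t)"
  unfolding hess_det_def hess_term_def
  by (rule column_finite_lincomb) (auto simp: finite_permutations column_finite_prod_hess_entry)

lemma hess_det_0: "hess_det e a 0 t = id_op"
  by (intro ext) (simp add: hess_det_def hess_term_def)

text \<open>Column \<open>a\<close> has nonzero entries only in rows \<open>a\<close> and \<open>a + 1\<close>.\<close>

lemma hess_term_vanishes:
  assumes "\<sigma> permutes {a..<a+r}" "\<sigma> a \<noteq> a" "\<sigma> (Suc a) \<noteq> a" "1 \<le> r"
  shows "hess_term e t a r \<sigma> = zero_op"
proof -
  have "a \<in> \<sigma> ` {a..<a+r}" using permutes_image[OF assms(1)] assms(4) by simp
  then obtain i where i: "i \<in> {a..<a+r}" "\<sigma> i = a" by auto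
  then have "Suc (Suc a) \<le> i" using assms(2,3) by (cases "i = a \<or> i = Suc a") auto
  then have "hess_entry e t a i (\<sigma> i) = zero_op" using i by (auto simp: hess_entry_def intro!: e_neg)
  then have "prod_op (\<lambda>i. hess_entry e t a i (\<sigma> i)) [a..<a+r] = zero_op"
    by (rule prod_op_eq_zero[rotated]) (use i in simp)
  then show ?thesis by (simp add: hess_term_def zero_op_def)
qed

lemma sum_hess_term_fixing:
  assumes "1 \<le> r"
  shows "(\<Sum>\<sigma>\<in>{\<sigma>. \<sigma> permutes {a..<a+r} \<and> \<sigma> a = a}. hess_term e t a r \<sigma> m mu)
    = comp_op (e (t+1)) (hess_det e (Suc a) (r-1) 0) m mu"
proof -
  have S: "{a..<a+r} - {a} = {Suc a..<Suc a + (r-1)}" using assms by auto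
  have "(\<Sum>\<sigma>\<in>{\<sigma>. \<sigma> permutes {a..<a+r} \<and> \<sigma> a = a}. hess_term e t a r \<sigma> m mu)
      = (\<Sum>\<tau>\<in>{\<tau>. \<tau> permutes {Suc a..<Suc a + (r-1)}}. of_int (sign \<tau>) *
         comp_op (e (t+1)) (prod_op (\<lambda>i. hess_entry e 0 (Suc a) i (\<tau> i)) [Suc a..<Suc a + (r-1)]) m mu)"
  proof (rule sum.cong)
    fix \<tau> assume "\<tau> \<in> {\<tau>. \<tau> permutes {Suc a..<Suc a + (r-1)}}"
    then have "\<tau> a = a" by (auto intro: permutes_not_in)
    moreover have "[a..<a+r] = a # [Suc a..<Suc a + (r-1)]" using assms by (simp add: upt_conv_Cons)
    moreover have "prod_op (\<lambda>i. hess_entry e t a i (\<tau> i)) [Suc a..<Suc a + (r-1)]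
        = prod_op (\<lambda>i. hess_entry e 0 (Suc a) i (\<tau> i)) [Suc a..<Suc a + (r-1)]"
      by (auto intro!: prod_op_cong simp: hess_entry_def)
    ultimately show "hess_term e t a r \<tau> m mu = of_int (sign \<tau>) *
        comp_op (e (t+1)) (prod_op (\<lambda>i. hess_entry e 0 (Suc a) i (\<tau> i)) [Suc a..<Suc a + (r-1)]) m mu"
      by (simp add: hess_term_def hess_entry_def add.commute)
  qed (simp only: permutes_fixing_iff S)
  also have "\<dots> = comp_op (e (t+1)) (hess_det e (Suc a) (r-1) 0) m mu"
    unfolding hess_det_def hess_term_def
    by (subst comp_op_lincomb_right) (auto simp: finite_permutations column_finite_prod_hess_entry)
  finally show ?thesis .
qed

text \<open>Composing with the transposition of \<open>a\<close> and \<open>a + 1\<close> turns a permutation fixing \<open>a\<close> into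
one with \<open>\<sigma> (a + 1) = a\<close>; the entry \<open>e 0 = 1\<close> drops out and row \<open>a + 1\<close> becomes the new first
row, with its shift increased by one.\<close>

lemma hess_term_comp_swap:
  assumes r: "2 \<le> r" and \<tau>: "\<tau> permutes {Suc a..<Suc a + (r-1)}"
  shows "hess_term e t a r (\<tau> \<circ> transpose a (Suc a)) m mu = - hess_term e (t+1) (Suc a) (r-1) \<tau> m mu"
proof -
  define tr where "tr = transpose a (Suc a)"
  have "\<tau> permutes {a..<a+r}" using \<tau> by (rule permutes_subset) auto
  then have sign: "sign (\<tau> \<circ> tr) = - sign \<tau>"
    using permutes_imp_permutation[of "{a..<a+r}"]
    by (simp add: sign_compose tr_def permutation_swap_id sign_swap_id)
  have "\<tau> a = a" using \<tau> by (rule permutes_not_in) simp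
  then have E: "hess_entry e t a (Suc a) ((\<tau> \<circ> tr) (Suc a)) = id_op"
    "hess_entry e t a a ((\<tau> \<circ> tr) a) = hess_entry e (t+1) (Suc a) (Suc a) (\<tau> (Suc a))"
    by (simp_all add: hess_entry_def tr_def e_0 algebra_simps)
  have rows: "prod_op (\<lambda>i. hess_entry e t a i ((\<tau> \<circ> tr) i)) [Suc (Suc a)..<a+r]
      = prod_op (\<lambda>i. hess_entry e (t+1) (Suc a) i (\<tau> i)) [Suc (Suc a)..<a+r]"
    by (auto intro!: prod_op_cong simp: hess_entry_def tr_def)
  have upt: "[a..<a+r] = a # Suc a # [Suc (Suc a)..<a+r]" "[Suc a..<Suc a + (r-1)] = Suc a # [Suc (Suc a)..<a+r]"
    using r by (simp_all add: upt_conv_Cons)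
  show ?thesis
    unfolding hess_term_def tr_def[symmetric] upt prod_op_Cons sign E rows
      comp_op_id_left[OF column_finite_prod_hess_entry]
    by (simp only: of_int_minus mult_minus_left)
qed

lemma sum_hess_term_swapping:
  assumes r: "2 \<le> r"
  shows "(\<Sum>\<sigma>\<in>{\<sigma>. \<sigma> permutes {a..<a+r} \<and> \<sigma> (Suc a) = a}. hess_term e t a r \<sigma> m mu)
    = - hess_det e (Suc a) (r-1) (t+1) m mu"
proof -
  define S where "S = {a..<a+r}"
  define S' where "S' = {Suc a..<Suc a + (r-1)}"
  have S'S: "S' = S - {a}" using r by (auto simp: S_def S'_def)
  define tr where "tr = transpose a (Suc a)"
  have trS: "tr permutes S" unfolding tr_def using r by (intro permutes_swap_id) (auto simp: S_def)
  have tr_tr: "\<sigma> \<circ> tr \<circ> tr = \<sigma>" for \<sigma> :: "nat \<Rightarrow> nat" by (rule ext) (simp add: tr_def)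
  have "(\<Sum>\<sigma>\<in>{\<sigma>. \<sigma> permutes S \<and> \<sigma> (Suc a) = a}. hess_term e t a r \<sigma> m mu)
      = (\<Sum>\<tau>\<in>{\<tau>. \<tau> permutes S'}. - hess_term e (t+1) (Suc a) (r-1) \<tau> m mu)"
  proof (rule sum.reindex_bij_witness[where i="\<lambda>\<tau>. \<tau> \<circ> tr" and j="\<lambda>\<sigma>. \<sigma> \<circ> tr"])
    fix \<tau> assume "\<tau> \<in> {\<tau>. \<tau> permutes S'}"
    then have "\<tau> permutes S \<and> \<tau> a = a" unfolding S'S permutes_fixing_iff[symmetric] by simp
    then show "\<tau> \<circ> tr \<in> {\<sigma>. \<sigma> permutes S \<and> \<sigma> (Suc a) = a}"
      using permutes_compose[OF trS] by (simp add: tr_def)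
    show "\<tau> \<circ> tr \<circ> tr = \<tau>" by (rule tr_tr)
  next
    fix \<sigma> assume "\<sigma> \<in> {\<sigma>. \<sigma> permutes S \<and> \<sigma> (Suc a) = a}"
    then have "\<sigma> \<circ> tr permutes S \<and> (\<sigma> \<circ> tr) a = a"
      using permutes_compose[OF trS] by (simp add: tr_def)
    then have stp: "\<sigma> \<circ> tr permutes S'" unfolding S'S permutes_fixing_iff[symmetric] .
    then show "\<sigma> \<circ> tr \<in> {\<tau>. \<tau> permutes S'}" by simp
    show "\<sigma> \<circ> tr \<circ> tr = \<sigma>" by (rule tr_tr)
    show "- hess_term e (t+1) (Suc a) (r-1) (\<sigma> \<circ> tr) m mu = hess_term e t a r \<sigma> m mu"
      using hess_term_comp_swap[OF r stp[unfolded S'_def]] tr_tr by (simp add: tr_def)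
  qed
  also have "\<dots> = - hess_det e (Suc a) (r-1) (t+1) m mu"
    by (simp add: hess_det_def S'_def sum_negf)
  finally show ?thesis by (simp add: S_def)
qed

lemma hess_det_rec:
  assumes r: "1 \<le> r"
  shows "hess_det e a r t m mu = comp_op (e (t+1)) (hess_det e (Suc a) (r-1) 0) m mu
           - (if 2 \<le> r then hess_det e (Suc a) (r-1) (t+1) m mu else 0)"
proof -
  define P where "P = {\<sigma>. \<sigma> permutes {a..<a+r}}"
  define f where "f \<sigma> = hess_term e t a r \<sigma> m mu" for \<sigma>
  have finP: "finite P" by (simp add: P_def finite_permutations)
  have split: "f \<sigma> = (if \<sigma> a = a then f \<sigma> else 0) + (if \<sigma> (Suc a) = a then f \<sigma> else 0)" if "\<sigma> \<in> P" for \<sigma>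
  proof -
    have "inj \<sigma>" using that by (auto simp: P_def permutes_inj)
    then have "\<not> (\<sigma> a = a \<and> \<sigma> (Suc a) = a)" by (metis inj_eq n_not_Suc_n)
    then show ?thesis
      using hess_term_vanishes[OF _ _ _ r, where \<sigma>=\<sigma> and t=t] that by (auto simp: P_def f_def zero_op_def)
  qed
  have "hess_det e a r t m mu = sum f {\<sigma>\<in>P. \<sigma> a = a} + sum f {\<sigma>\<in>P. \<sigma> (Suc a) = a}"
    unfolding hess_det_def f_def[symmetric] P_def[symmetric]
    by (simp only: sum.cong[OF refl split] sum.distrib sum.inter_filter[OF finP])
  moreover have "sum f {\<sigma>\<in>P. \<sigma> (Suc a) = a} = 0" if "\<not> 2 \<le> r"
  proof -
    have "Suc a \<notin> {a..<a+r}" using that by simp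
    then have "{\<sigma>\<in>P. \<sigma> (Suc a) = a} = {}"
      by (auto simp: P_def dest: permutes_not_in[where x="Suc a"])
    then show ?thesis by (metis sum.empty)
  qed
  ultimately show ?thesis
    using sum_hess_term_fixing[OF r] sum_hess_term_swapping by (simp add: P_def f_def)
qed

lemma hess_det_expand:
  "1 \<le> r \<Longrightarrow> hess_det e a r t m mu
     = (\<Sum>k\<in>{1..r}. (-1)^(k-1) * comp_op (e (t + int k)) (hess_det e (a+k) (r-k) 0) m mu)"
proof (induction r arbitrary: a t rule: nat_induct_at_least)
  case base
  show ?case using hess_det_rec[of 1 a t m mu] by simp
next
  case (Suc r)
  have "(\<Sum>k\<in>{1..Suc r}. (-1)^(k-1) * comp_op (e (t + int k)) (hess_det e (a+k) (Suc r-k) 0) m mu)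
     = comp_op (e (t + 1)) (hess_det e (Suc a) r 0) m mu +
       (\<Sum>k\<in>{Suc 1..Suc r}. (-1)^(k-1) * comp_op (e (t + int k)) (hess_det e (a+k) (Suc r-k) 0) m mu)"
    by (subst sum.atLeast_Suc_atMost) auto
  also have "(\<Sum>k\<in>{Suc 1..Suc r}. (-1)^(k-1) * comp_op (e (t + int k)) (hess_det e (a+k) (Suc r-k) 0) m mu)
      = (\<Sum>k\<in>{1..r}. (-1)^(Suc k-1) * comp_op (e (t + int (Suc k))) (hess_det e (a+Suc k) (Suc r-Suc k) 0) m mu)"
    by (rule sum.shift_bounds_cl_Suc_ivl)
  also have "\<dots> = - (\<Sum>k\<in>{1..r}. (-1)^(k-1) * comp_op (e ((t + 1) + int k)) (hess_det e (Suc a + k) (r-k) 0) m mu)"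
  proof (subst sum_negf[symmetric], rule sum.cong[OF refl])
    fix k :: nat assume "k \<in> {1..r}"
    then have "(-1::'a)^(Suc k-1) = - ((-1)^(k-1))" by (cases k) auto
    then show "(-1)^(Suc k-1) * comp_op (e (t + int (Suc k))) (hess_det e (a+Suc k) (Suc r-Suc k) 0) m mu
        = - ((-1)^(k-1) * comp_op (e ((t + 1) + int k)) (hess_det e (Suc a + k) (r-k) 0) m mu)"
      by (simp add: ac_simps)
  qed
  finally show ?case using hess_det_rec[of "Suc r" a t m mu] Suc by simp
qed

lemma hess_det_shift_invariant: "hess_det e a r 0 = hess_det e b r 0"
proof (induction r arbitrary: a b rule: less_induct)
  case (less r)
  show ?case
  proof (cases "r = 0")
    case False
    then have r: "1 \<le> r" by simp
    show ?thesis
      by (intro ext, unfold hess_det_expand[OF r])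
        (rule sum.cong[OF refl], subst less[of "r - _" "a + _" "b + _"], auto)
  qed (simp add: hess_det_0)
qed

end

subsection \<open>Inverse of a power series of operators\<close>

lemma column_finite_conv_op:
  "(\<And>k. column_finite (A k)) \<Longrightarrow> (\<And>k. column_finite (B k)) \<Longrightarrow> column_finite (conv_op A B r)"
  unfolding conv_op_def by (rule column_finite_sum) (auto intro: column_finite_comp_op)

lemma conv_op_assoc:
  assumes B: "\<And>k. column_finite (B k)" and C: "\<And>k. column_finite (C k)"
  shows "conv_op (conv_op A B) C r = conv_op A (conv_op B C) r"
proof (intro ext)
  fix m mu
  have "conv_op A (conv_op B C) r m mu
      = (\<Sum>j\<in>{..r}. \<Sum>k\<in>{..r-j}. comp_op (A j) (comp_op (B k) (C (r-j-k))) m mu)"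
    unfolding conv_op_def atLeast0AtMost
    by (rule sum.cong[OF refl], rule comp_op_sum_right) (auto intro: column_finite_comp_op B C)
  also have "\<dots> = (\<Sum>j\<in>{..r}. \<Sum>k\<in>{..r-j}. comp_op (comp_op (A j) (B k)) (C (r-(j+k))) m mu)"
    by (simp add: comp_op_assoc[OF B C] diff_diff_left)
  also have "\<dots> = (\<Sum>(j,k)\<in>{(j,k). j+k \<le> r}. comp_op (comp_op (A j) (B k)) (C (r-(j+k))) m mu)"
  proof -
    have "{(j,k). j+k \<le> r} = Sigma {..r} (\<lambda>j. {..r-j})" by auto
    then show ?thesis by (simp add: sum.Sigma)
  qed
  also have "\<dots> = (\<Sum>l\<in>{..r}. \<Sum>j\<in>{..l}. comp_op (comp_op (A j) (B (l-j))) (C (r-(j+(l-j)))) m mu)"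
    by (rule sum.triangle_reindex_eq)
  also have "\<dots> = conv_op (conv_op A B) C r m mu"
    unfolding conv_op_def atLeast0AtMost comp_op_sum_left by simp
  finally show "conv_op (conv_op A B) C r m mu = conv_op A (conv_op B C) r m mu" ..
qed

lemma conv_op_left_inverse:
  fixes A B :: "nat \<Rightarrow> 'a::field oper"
  assumes A: "\<And>k. column_finite (A k)" and B: "\<And>k. column_finite (B k)"
    and A0: "A 0 = id_op"
    and right_inverse: "\<And>l. conv_op A B l = (if l = 0 then id_op else zero_op)"
  shows "conv_op B A r = (if r = 0 then id_op else zero_op)"
proof (induction r rule: less_induct)
  case (less r)
  have BA: "column_finite (conv_op B A r)" by (rule column_finite_conv_op[OF B A])
  show ?case
  proof (intro ext)
    fix m mu
    have "conv_op A (conv_op B A) r m mu = conv_op (conv_op A B) A r m mu"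
      by (simp add: conv_op_assoc[OF B A])
    also have "\<dots> = A r m mu"
    proof -
      have "comp_op (conv_op A B l) (A (r-l)) m mu = (if l = 0 then A r m mu else 0)" for l
        by (cases "l = 0") (simp_all add: right_inverse comp_op_id_left[OF A] comp_op_zero_left)
      then show ?thesis by (simp add: conv_op_def)
    qed
    finally have "conv_op A (conv_op B A) r m mu = A r m mu" .
    moreover have "conv_op A (conv_op B A) r m mu = conv_op B A r m mu + (if 1 \<le> r then A r m mu else 0)"
    proof -
      have "comp_op (A j) (conv_op B A (r-j)) m mu = (if j = r then A r m mu else 0)" if "j \<in> {1..r}" for j
        using that less[of "r-j"] by (auto simp: comp_op_id_right comp_op_zero_right)
      then show ?thesis
        unfolding conv_op_def[of A] sum.atLeast_Suc_atMost[OF le0] A0 diff_zero comp_op_id_left[OF BA] by simp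
    qed
    ultimately show "conv_op B A r m mu = (if r = 0 then id_op else zero_op) m mu"
      using A0 by (cases "r = 0") (auto simp: zero_op_def)
  qed
qed

subsection \<open>\<open>Q\<^sup>+\<close> as a sum of monomial operators, and its inverse\<close>

lemma comps_outside: "\<alpha> \<in> comps n r \<Longrightarrow> i = 0 \<or> n < i \<Longrightarrow> \<alpha> i = 0"
  unfolding comps_def mem_Collect_eq by (elim conjE allE impE)

lemma comps_sum: "\<alpha> \<in> comps n r \<Longrightarrow> (\<Sum>i=1..n. \<alpha> i) = r"
  by (simp add: comps_def)

lemma comps_intro: "(\<And>i. i = 0 \<or> n < i \<Longrightarrow> \<alpha> i = 0) \<Longrightarrow> (\<Sum>i=1..n. \<alpha> i) = r \<Longrightarrow> \<alpha> \<in> comps n r"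
  by (simp add: comps_def)

definition dominated :: "(nat \<Rightarrow> nat) \<Rightarrow> (nat \<Rightarrow> nat) set" where
  "dominated \<gamma> = {\<alpha>. \<forall>i. \<alpha> i \<le> \<gamma> i}"

lemma dominated_by_comp_subset:
  assumes "\<gamma> \<in> comps n r"
  shows "dominated \<gamma> \<subseteq> {f. \<forall>x. (x \<in> {1..n} \<longrightarrow> f x \<in> {..r}) \<and> (x \<notin> {1..n} \<longrightarrow> f x = 0)}"
proof (intro subsetI CollectI allI conjI impI)
  fix \<alpha> x assume "\<alpha> \<in> dominated \<gamma>"
  then have \<alpha>: "\<alpha> x \<le> \<gamma> x" by (simp add: dominated_def)
  show "\<alpha> x \<in> {..r}" if "x \<in> {1..n}"
    using \<alpha> member_le_sum[of x "{1..n}" \<gamma>] that comps_sum[OF assms] by simp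
  show "\<alpha> x = 0" if "x \<notin> {1..n}"
    using \<alpha> that comps_outside[OF assms, of x] by auto
qed

lemma finite_comps: "finite (comps n r)"
proof -
  have "comps n r \<subseteq> {f. \<forall>x. (x \<in> {1..n} \<longrightarrow> f x \<in> {..r}) \<and> (x \<notin> {1..n} \<longrightarrow> f x = 0)}"
  proof
    fix \<alpha> assume "\<alpha> \<in> comps n r"
    moreover have "\<alpha> \<in> dominated \<alpha>" by (simp add: dominated_def)
    ultimately show "\<alpha> \<in> {f. \<forall>x. (x \<in> {1..n} \<longrightarrow> f x \<in> {..r}) \<and> (x \<notin> {1..n} \<longrightarrow> f x = 0)}"
      using dominated_by_comp_subset by blast
  qed
  then show ?thesis by (rule finite_subset) (rule finite_set_of_finite_funs, auto)
qed

lemma finite_dominated_comp: "\<gamma> \<in> comps n r \<Longrightarrow> finite (dominated \<gamma>)"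
  by (rule finite_subset[OF dominated_by_comp_subset finite_set_of_finite_funs]) auto

lemma comps_zero: "comps n 0 = {\<lambda>_. 0}"
proof (rule set_eqI, rule iffI)
  fix \<alpha> assume "\<alpha> \<in> comps n 0"
  then have "\<alpha> i = 0" for i
    using comps_outside[of \<alpha> n 0 i] comps_sum[of \<alpha> n 0] by (cases "i \<in> {1..n}") auto
  then show "\<alpha> \<in> {\<lambda>_. 0}" by auto
qed (simp add: comps_def)

definition Qplus_weight :: "'a::field \<Rightarrow> 'a \<Rightarrow> nat \<Rightarrow> (nat \<Rightarrow> nat) \<Rightarrow> 'a" where
  "Qplus_weight q z n \<alpha> = z ^ \<alpha> n / (\<Prod>i=1..n. qpoch q (\<alpha> i))"

definition Qminus_weight :: "'a::field \<Rightarrow> 'a \<Rightarrow> nat \<Rightarrow> (nat \<Rightarrow> nat) \<Rightarrow> 'a" where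
  "Qminus_weight q z n \<alpha> = z ^ \<alpha> n / (\<Prod>i=1..n. qpoch q (\<alpha> i)) * (\<Prod>i=1..n. q ^ (\<alpha> i * (\<alpha> i + 1)))"

lemma Qplus_eq_sum_mono_op:
  "1 \<le> n \<Longrightarrow> Qplus n q z r = (\<lambda>m mu. \<Sum>\<alpha>\<in>comps n r.
     ((-1)^r * Qplus_weight q z n \<alpha>) * mono_op (Qplus_shift n \<alpha>) (Qplus_coeff q n \<alpha>) m mu)"
  unfolding Qplus_def Qplus_summand_eq_mono_op
  by (intro ext) (simp add: sum_distrib_left mult.assoc Qplus_weight_def)

lemma Qminus_eq_sum_mono_op:
  "1 \<le> n \<Longrightarrow> Qminus n q z r = (\<lambda>m mu. \<Sum>\<alpha>\<in>comps n r.
     Qminus_weight q z n \<alpha> * mono_op (Qminus_shift n \<alpha>) (Qminus_coeff q n \<alpha>) m mu)"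
  unfolding Qminus_def Qminus_summand_eq_mono_op by (intro ext) (simp add: Qminus_weight_def)

lemma column_finite_Qplus: "1 \<le> n \<Longrightarrow> column_finite (Qplus n q z r)"
  unfolding Qplus_eq_sum_mono_op
  by (rule column_finite_lincomb) (auto simp: finite_comps column_finite_mono_op)

lemma column_finite_Qminus: "1 \<le> n \<Longrightarrow> column_finite (Qminus n q z r)"
  unfolding Qminus_eq_sum_mono_op
  by (rule column_finite_lincomb) (auto simp: finite_comps column_finite_mono_op)

lemma Qplus_0: "1 \<le> n \<Longrightarrow> Qplus n q z 0 = id_op"
  unfolding Qplus_eq_sum_mono_op comps_zero id_op_eq_mono_op
  by (simp add: Qplus_weight_def qpoch_def)
    (rule mono_op_cong, auto simp: Qplus_shift_def Qplus_coeff_def bstar_coeff_def)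

lemma Qminus_0: "1 \<le> n \<Longrightarrow> Qminus n q z 0 = id_op"
  unfolding Qminus_eq_sum_mono_op comps_zero id_op_eq_mono_op
  by (simp add: Qminus_weight_def qpoch_def)
    (rule mono_op_cong, auto simp: Qminus_shift_def Qminus_coeff_def bstar_coeff_def)

definition signed_Qplus :: "nat \<Rightarrow> 'a::field \<Rightarrow> 'a \<Rightarrow> int \<Rightarrow> 'a oper" where
  "signed_Qplus n q z s = scale_op ((-1) ^ nat s) (Qplus_int n q z s)"

lemma hessenberg_symbol_signed_Qplus:
  assumes n: "1 \<le> n"
  shows "hessenberg_symbol (signed_Qplus n q z)"
proof
  fix s :: int assume "s < 0"
  then show "signed_Qplus n q z s = zero_op"
    by (intro ext) (simp add: signed_Qplus_def Qplus_int_def scale_op_def zero_op_def)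
next
  show "signed_Qplus n q z 0 = id_op"
    by (intro ext) (simp add: signed_Qplus_def Qplus_int_def scale_op_def Qplus_0[OF n])
next
  fix s show "column_finite (signed_Qplus n q z s)"
    unfolding signed_Qplus_def Qplus_int_def
    by (auto intro!: column_finite_scale_op column_finite_Qplus column_finite_zero_op n)
qed

lemma Dcoef_eq_hess_det: "Dcoef n q z r = hess_det (signed_Qplus n q z) 1 r 0"
proof -
  have "(\<lambda>i j. let s = 1 - int i + int j in scale_op ((-1) ^ nat s) (Qplus_int n q z s))
      = hess_entry (signed_Qplus n q z) 0 1"
    by (intro ext) (simp add: hess_entry_def signed_Qplus_def Let_def)
  then show ?thesis
    by (simp add: Dcoef_def det_op_def hess_det_def hess_term_def atLeastLessThanSuc_atLeastAtMost)
qed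

lemma column_finite_Dcoef: "1 \<le> n \<Longrightarrow> column_finite (Dcoef n q z r)"
  unfolding Dcoef_eq_hess_det
  using hessenberg_symbol_signed_Qplus hessenberg_symbol.column_finite_hess_det by blast

lemma Dcoef_0: "Dcoef n q z 0 = id_op"
  by (intro ext) (simp add: Dcoef_def det_op_def)

lemma Dcoef_rec:
  assumes n: "1 \<le> n" and r: "1 \<le> r"
  shows "Dcoef n q z r m mu = - (\<Sum>k\<in>{1..r}. comp_op (Qplus n q z k) (Dcoef n q z (r-k)) m mu)"
proof -
  interpret hessenberg_symbol "signed_Qplus n q z" by (rule hessenberg_symbol_signed_Qplus[OF n])
  have "Dcoef n q z r m mu = (\<Sum>k\<in>{1..r}. (-1)^(k-1) *
      comp_op (signed_Qplus n q z (0 + int k)) (hess_det (signed_Qplus n q z) (1+k) (r-k) 0) m mu)"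
    unfolding Dcoef_eq_hess_det by (rule hess_det_expand[OF r])
  also have "\<dots> = (\<Sum>k\<in>{1..r}. - comp_op (Qplus n q z k) (Dcoef n q z (r-k)) m mu)"
  proof (rule sum.cong[OF refl])
    fix k assume "k \<in> {1..r}"
    then have "(-1::'a)^(k-1) * (-1)^k = -1" by (cases k) auto
    then show "(-1)^(k-1) * comp_op (signed_Qplus n q z (0 + int k)) (hess_det (signed_Qplus n q z) (1+k) (r-k) 0) m mu
        = - comp_op (Qplus n q z k) (Dcoef n q z (r-k)) m mu"
      unfolding Dcoef_eq_hess_det hess_det_shift_invariant[of "1+k" _ 1]
      by (simp add: signed_Qplus_def Qplus_int_def comp_op_scale_left mult.assoc[symmetric])
  qed
  finally show ?thesis by (simp add: sum_negf)
qed

lemma Qplus_Dcoef_inverse: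
  assumes n: "1 \<le> n"
  shows "conv_op (Qplus n q z) (Dcoef n q z) r = (if r = 0 then id_op else zero_op)"
proof (intro ext)
  fix m mu
  have "{0..r} = insert 0 {1..r}" by auto
  then have "conv_op (Qplus n q z) (Dcoef n q z) r m mu
      = Dcoef n q z r m mu + (\<Sum>k\<in>{1..r}. comp_op (Qplus n q z k) (Dcoef n q z (r-k)) m mu)"
    by (simp add: conv_op_def Qplus_0[OF n] comp_op_id_left[OF column_finite_Dcoef[OF n]])
  then show "conv_op (Qplus n q z) (Dcoef n q z) r m mu = (if r = 0 then id_op else zero_op) m mu"
    using Dcoef_rec[OF n, of r q z m mu] by (cases "r = 0") (auto simp: Dcoef_0 zero_op_def)
qed

lemma Dcoef_Qplus_inverse:
  "1 \<le> n \<Longrightarrow> conv_op (Dcoef n q z) (Qplus n q z) r = (if r = 0 then id_op else zero_op)"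
  by (rule conv_op_left_inverse)
    (auto simp: column_finite_Qplus column_finite_Dcoef Qplus_0 Qplus_Dcoef_inverse)

subsection \<open>A q-binomial identity\<close>

definition inv_qpoch_pair :: "'a::field \<Rightarrow> nat \<Rightarrow> nat \<Rightarrow> 'a" where
  "inv_qpoch_pair q g b = (if b \<le> g then inverse (qpoch q b * qpoch q (g - b)) else 0)"

definition qpair_weight :: "'a::field \<Rightarrow> nat \<Rightarrow> nat \<Rightarrow> 'a" where
  "qpair_weight q g a = (-(q^2))^a * q^((g-a)*(g-a+1)) / (qpoch q a * qpoch q (g-a))"

lemma qpoch_Suc: "qpoch q (Suc k) = qpoch q k * (1 - (q^2) ^ Suc k)"
  by (simp add: qpoch_def power_mult)

context
  fixes q :: "'a::field"
  assumes q_not_root_of_unity: "\<forall>j\<ge>1. q ^ j \<noteq> 1"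
begin

lemma one_minus_q2_power_nonzero: "1 - (q^2) ^ Suc k \<noteq> 0"
proof -
  have "q ^ (2 * Suc k) \<noteq> 1" by (rule q_not_root_of_unity[rule_format]) simp
  then show ?thesis by (metis power_mult right_minus_eq)
qed

lemma qpoch_nonzero: "qpoch q k \<noteq> 0"
  unfolding qpoch_def using q_not_root_of_unity by (auto simp: power_mult[symmetric])

lemma inv_qpoch_pair_Suc_0: "(1 - (q^2) ^ Suc g) * inv_qpoch_pair q (Suc g) 0 = inv_qpoch_pair q g 0"
  using qpoch_nonzero one_minus_q2_power_nonzero by (simp add: inv_qpoch_pair_def qpoch_Suc field_simps)

lemma inv_qpoch_pair_Suc:
  assumes "b \<le> g"
  shows "(1 - (q^2) ^ Suc g) * inv_qpoch_pair q (Suc g) (Suc b)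
    = (q^2) ^ Suc b * inv_qpoch_pair q g (Suc b) + inv_qpoch_pair q g b"
proof (cases "b = g")
  case True
  then show ?thesis
    using qpoch_nonzero one_minus_q2_power_nonzero by (simp add: inv_qpoch_pair_def qpoch_Suc field_simps)
next
  case False
  then obtain c where c: "g = Suc (b + c)" using assms by (metis add_Suc_right le_add_diff_inverse le_neq_implies_less less_imp_Suc_add)
  define Q where "Q = q^2"
  define A where "A = Q ^ Suc b"
  define C where "C = Q ^ Suc c"
  have nz: "qpoch q b \<noteq> 0" "qpoch q c \<noteq> 0" "1 - A \<noteq> 0" "1 - C \<noteq> 0"
    using qpoch_nonzero one_minus_q2_power_nonzero by (auto simp: Q_def A_def C_def)
  have QA: "Q ^ Suc g = A * C" using c by (simp add: A_def C_def power_add[symmetric])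
  have qs: "qpoch q (Suc k) = qpoch q k * (1 - Q ^ Suc k)" for k
    by (simp add: qpoch_Suc Q_def)
  have w1: "inv_qpoch_pair q (Suc g) (Suc b) = inverse (qpoch q b * (1 - A) * (qpoch q c * (1 - C)))"
    using c by (simp add: inv_qpoch_pair_def qs A_def C_def)
  have w2: "inv_qpoch_pair q g (Suc b) = inverse (qpoch q b * (1 - A) * qpoch q c)"
    using c by (simp add: inv_qpoch_pair_def qs A_def)
  have w3: "inv_qpoch_pair q g b = inverse (qpoch q b * (qpoch q c * (1 - C)))"
    using c by (simp add: inv_qpoch_pair_def qs C_def)
  define B where "B = 1 - A"
  define D where "D = 1 - C"
  have AB: "A = 1 - B" "C = 1 - D" by (simp_all add: B_def D_def)
  have "B \<noteq> 0" "D \<noteq> 0" using nz by (simp_all add: B_def D_def)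
  then show ?thesis
    unfolding Q_def[symmetric] QA w1 w2 w3 A_def[symmetric] B_def[symmetric] D_def[symmetric] AB(1)
    unfolding AB(2)
    using nz(1,2) by (simp add: field_simps)
qed

text \<open>By the q-binomial theorem this sum is \<open>\<Prod>\<^sub>k\<^sub><\<^sub>g (1 - q\<^sup>2\<^sup>k) / (q\<^sup>2)\<^sub>g\<close>, which vanishes for
\<open>g \<ge> 1\<close>; we verify it through the q-Pascal rule instead.\<close>

lemma alternating_inv_qpoch_pair_sum_eq_0:
  "(\<Sum>b\<le>Suc g. (-1)^b * q^(b*(b-1)) * inv_qpoch_pair q (Suc g) b) = 0"
proof -
  define Q where "Q = q^2"
  define f where "f d = (-1)^d * q^(d*(d-1)) * Q^d * inv_qpoch_pair q g d" for d
  have power_step: "q^(Suc c * c) = q^(c*(c-1)) * Q^c" for c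
  proof -
    have "Suc c * c = c*(c-1) + 2*c" by (cases c) auto
    then show ?thesis by (simp only: Q_def power_add power_mult)
  qed
  have "(1 - Q ^ Suc g) * (\<Sum>b\<le>Suc g. (-1)^b * q^(b*(b-1)) * inv_qpoch_pair q (Suc g) b)
      = (\<Sum>b\<le>Suc g. (-1)^b * q^(b*(b-1)) * ((1 - Q ^ Suc g) * inv_qpoch_pair q (Suc g) b))"
    unfolding sum_distrib_left by (rule sum.cong) (simp_all add: mult_ac)
  also have "\<dots> = inv_qpoch_pair q g 0 + (\<Sum>c\<le>g. (-1)^(Suc c) * q^(Suc c*c) * ((1 - Q ^ Suc g) * inv_qpoch_pair q (Suc g) (Suc c)))"
    unfolding sum.atMost_Suc_shift using inv_qpoch_pair_Suc_0[of g] by (simp add: Q_def)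
  also have "(\<Sum>c\<le>g. (-1)^(Suc c) * q^(Suc c*c) * ((1 - Q ^ Suc g) * inv_qpoch_pair q (Suc g) (Suc c)))
      = (\<Sum>c\<le>g. f (Suc c)) - (\<Sum>c\<le>g. (-1)^c * q^(c*(c-1)) * Q^c * inv_qpoch_pair q g c)"
    unfolding sum_subtractf[symmetric]
  proof (rule sum.cong[OF refl])
    fix c assume "c \<in> {..g}"
    then have cg: "c \<le> g" by simp
    have "q^(Suc c * (Suc c - 1)) = q^(c*(c-1)) * Q^c" using power_step by simp
    then show "(-1)^(Suc c) * q^(Suc c*c) * ((1 - Q ^ Suc g) * inv_qpoch_pair q (Suc g) (Suc c))
        = f (Suc c) - (-1)^c * q^(c*(c-1)) * Q^c * inv_qpoch_pair q g c"
      unfolding inv_qpoch_pair_Suc[OF cg, folded Q_def] f_def power_step by (simp add: algebra_simps)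
  qed
  also have "(\<Sum>c\<le>g. f (Suc c)) = (\<Sum>c\<le>g. f c) - inv_qpoch_pair q g 0"
    using sum.atMost_Suc_shift[of f g] by (simp add: f_def inv_qpoch_pair_def)
  finally have "(1 - Q ^ Suc g) * (\<Sum>b\<le>Suc g. (-1)^b * q^(b*(b-1)) * inv_qpoch_pair q (Suc g) b) = 0"
    by (simp add: f_def)
  then show ?thesis using one_minus_q2_power_nonzero by (simp add: Q_def)
qed

lemma sum_qpair_weight_eq_0:
  assumes "1 \<le> g"
  shows "(\<Sum>a\<le>g. qpair_weight q g a) = 0"
proof -
  have "(\<Sum>a\<le>g. qpair_weight q g a) = (\<Sum>b\<le>g. qpair_weight q g (g - b))"
    by (rule sum.reindex_bij_witness[where i="\<lambda>b. g - b" and j="\<lambda>b. g - b"]) auto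
  also have "\<dots> = (\<Sum>b\<le>g. (-(q^2))^g * ((-1)^b * q^(b*(b-1)) * inv_qpoch_pair q g b))"
  proof (rule sum.cong[OF refl])
    fix b assume "b \<in> {..g}"
    then have bg: "b \<le> g" by simp
    have e1: "(-(q^2))^g = (-(q^2))^(g-b) * (-(q^2))^b" using bg by (simp add: power_add[symmetric])
    have e2: "(-(q^2))^b * (-1)^b = q^(2*b)"
      by (simp add: power_mult_distrib[symmetric] power_mult)
    have e3: "q^(2*b) * q^(b*(b-1)) = q^(b*(b+1))"
    proof -
      have "2*b + b*(b-1) = b*(b+1)" by (cases b) auto
      then show ?thesis by (metis power_add)
    qed
    have "(-(q^2))^g * ((-1)^b * q^(b*(b-1)) * inv_qpoch_pair q g b)
        = (-(q^2))^(g-b) * (((-(q^2))^b * (-1)^b) * q^(b*(b-1))) * inv_qpoch_pair q g b"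
      unfolding e1 by (simp add: mult_ac)
    also have "\<dots> = (-(q^2))^(g-b) * q^(b*(b+1)) * inv_qpoch_pair q g b"
      unfolding e2 e3 ..
    finally have "(-(q^2))^g * ((-1)^b * q^(b*(b-1)) * inv_qpoch_pair q g b)
        = (-(q^2))^(g-b) * q^(b*(b+1)) * inv_qpoch_pair q g b" .
    then show "qpair_weight q g (g - b) = (-(q^2))^g * ((-1)^b * q^(b*(b-1)) * inv_qpoch_pair q g b)"
      using bg by (simp add: qpair_weight_def inv_qpoch_pair_def divide_inverse mult.commute) metis
  qed
  also have "\<dots> = 0"
    using alternating_inv_qpoch_pair_sum_eq_0[of "g - 1"] assms by (simp add: sum_distrib_left[symmetric])
  finally show ?thesis .
qed

end

subsection \<open>Cancellation in \<open>\<Sum>\<^sub>k q\<^sup>2\<^sup>k Q\<^sup>+\<^sub>k Q\<^sup>-\<^sub>r\<^sub>-\<^sub>k\<close>\<close>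

lemma comps_nonzero_before_zero:
  assumes \<gamma>: "\<gamma> \<in> comps n r" and r: "1 \<le> r" and rn: "r < n"
  obtains i where "1 \<le> i" "i \<le> n" "1 \<le> \<gamma> i" "\<gamma> (cyc_succ n i) = 0"
proof -
  define Z where "Z = {j\<in>{1..n}. \<gamma> j = 0}"
  define P where "P = {i\<in>{1..n}. 1 \<le> \<gamma> i}"
  have fin: "finite Z" "finite P" by (auto simp: Z_def P_def)
  have "Z \<noteq> {}"
  proof
    assume "Z = {}"
    then have "(\<Sum>i=1..n. (1::nat)) \<le> (\<Sum>i=1..n. \<gamma> i)" by (intro sum_mono) (auto simp: Z_def)
    then show False using comps_sum[OF \<gamma>] rn by simp
  qed
  have "P \<noteq> {}"
  proof
    assume "P = {}"
    then have "(\<Sum>i=1..n. \<gamma> i) = 0" by (auto simp: P_def)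
    then show False using comps_sum[OF \<gamma>] r by simp
  qed
  show ?thesis
  proof (cases "\<gamma> 1 = 0")
    case False
    define j where "j = Min Z"
    have "j \<in> Z" unfolding j_def using fin(1) \<open>Z \<noteq> {}\<close> by (rule Min_in)
    then have j: "2 \<le> j" "j \<le> n" "\<gamma> j = 0" using False by (auto simp: Z_def dest: le_neq_implies_less)
    have "j - 1 \<notin> Z"
      using Min_le[OF fin(1), of "j - 1"] j(1) by (auto simp: j_def)
    then have "1 \<le> \<gamma> (j - 1)" using j by (auto simp: Z_def)
    moreover have "cyc_succ n (j - 1) = j" using j by (auto simp: cyc_succ_def)
    ultimately show ?thesis using j by (intro that[of "j - 1"]) auto
  next
    case True
    define i where "i = Max P"
    have "i \<in> P" unfolding i_def using fin(2) \<open>P \<noteq> {}\<close> by (rule Max_in)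
    then have i: "1 \<le> i" "i \<le> n" "1 \<le> \<gamma> i" by (auto simp: P_def)
    have "\<gamma> (cyc_succ n i) = 0"
    proof (cases "i = n")
      case False
      have "Suc i \<notin> P" using Max_ge[OF fin(2), of "Suc i"] by (auto simp: i_def)
      then show ?thesis using i False by (auto simp: P_def cyc_succ_def)
    qed (use \<open>\<gamma> 1 = 0\<close> in \<open>simp add: cyc_succ_def\<close>)
    then show ?thesis using i by (intro that)
  qed
qed

lemma sum_dominated_split:
  fixes f R :: "_ \<Rightarrow> 'a::comm_ring_1"
  shows "(\<Sum>\<alpha>\<in>dominated \<gamma>. f (\<alpha> i) * R (\<alpha>(i := 0)))
    = (\<Sum>a\<le>\<gamma> i. f a) * (\<Sum>\<beta>\<in>dominated (\<gamma>(i := 0)). R \<beta>)"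
proof -
  have "(\<Sum>\<alpha>\<in>dominated \<gamma>. f (\<alpha> i) * R (\<alpha>(i := 0))) = (\<Sum>(\<beta>, a)\<in>dominated (\<gamma>(i := 0)) \<times> {..\<gamma> i}. f a * R \<beta>)"
  proof (rule sum.reindex_bij_witness[where i="\<lambda>(\<beta>, a). \<beta>(i := a)" and j="\<lambda>\<alpha>. (\<alpha>(i := 0), \<alpha> i)"])
    fix \<alpha> assume "\<alpha> \<in> dominated \<gamma>"
    then show "(\<alpha>(i := 0), \<alpha> i) \<in> dominated (\<gamma>(i := 0)) \<times> {..\<gamma> i}" by (auto simp: dominated_def)
    show "(case (\<alpha>(i := 0), \<alpha> i) of (\<beta>, a) \<Rightarrow> \<beta>(i := a)) = \<alpha>" by simp
    show "(case (\<alpha>(i := 0), \<alpha> i) of (\<beta>, a) \<Rightarrow> f a * R \<beta>) = f (\<alpha> i) * R (\<alpha>(i := 0))" by simp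
  next
    fix p assume p: "p \<in> dominated (\<gamma>(i := 0)) \<times> {..\<gamma> i}"
    obtain \<beta> a where pe: "p = (\<beta>, a)" by (cases p)
    have "\<beta> i = 0" using p pe by (auto simp: dominated_def dest: spec[of _ i])
    then show "(case (case p of (\<beta>, a) \<Rightarrow> \<beta>(i := a)) of \<alpha> \<Rightarrow> (\<alpha>(i := 0), \<alpha> i)) = p"
      using pe by auto
    show "(case p of (\<beta>, a) \<Rightarrow> \<beta>(i := a)) \<in> dominated \<gamma>"
      using p pe by (auto simp: dominated_def split: if_splits)
  qed
  also have "\<dots> = (\<Sum>a\<le>\<gamma> i. f a) * (\<Sum>\<beta>\<in>dominated (\<gamma>(i := 0)). R \<beta>)"
    by (simp add: sum_product sum.cartesian_product[symmetric] sum.swap[of _ "dominated (\<gamma>(i := 0))"] mult.commute)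
  finally show ?thesis .
qed

lemma bstar_coeff_add: "bstar_coeff q x a * bstar_coeff q (x + a) b = bstar_coeff q x (a + b)"
  by (induction b) (auto simp: bstar_coeff_def algebra_simps)

text \<open>\<open>site_factor q x g h b\<close> is the coefficient picked up at a site holding \<open>x\<close> particles
when \<open>Q\<^sup>-\<close> moves \<open>h - b\<close> particles in and \<open>Q\<^sup>+\<close> moves \<open>b\<close> more in, while together they move
\<open>g\<close> particles out.\<close>

definition site_factor :: "'a::comm_ring_1 \<Rightarrow> nat \<Rightarrow> nat \<Rightarrow> nat \<Rightarrow> nat \<Rightarrow> 'a" where
  "site_factor q x g h b =
     (if g \<le> x + (h - b) then 1 else 0) * bstar_coeff q x (h - b) * bstar_coeff q (x + (h - b) - g) b"

lemma site_factor_empty_site: "b \<le> h \<Longrightarrow> site_factor q x 0 h b = bstar_coeff q x h"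
  using bstar_coeff_add[of q x "h - b" b] by (simp add: site_factor_def)

lemma site_factor_merge:
  fixes x B g a b :: nat
  assumes "a \<le> g"
  shows "(if g - a \<le> x + B then 1 else 0) * bstar_coeff q x B *
      ((if a \<le> x + B - (g - a) then 1 else 0) * bstar_coeff q (x + B - (g - a) - a) b)
    = (if g \<le> x + B then 1 else 0) * bstar_coeff q x B * bstar_coeff q (x + B - g) b"
proof (cases "g \<le> x + B")
  case True
  have h: "g - a \<le> x + B" "a \<le> x + B - (g - a)" "x + B - (g - a) - a = x + B - g"
    using assms True by arith+
  show ?thesis unfolding if_P[OF h(1)] if_P[OF h(2)] if_P[OF True] h(3) by simp
next
  case False
  then have "\<not> (g - a \<le> x + B \<and> a \<le> x + B - (g - a))" using assms by arith
  then show ?thesis using False by auto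
qed

lemma Qminus_then_Qplus_monomial:
  fixes q :: "'a::field"
  assumes "\<alpha> \<in> dominated \<gamma>"
  defines "\<alpha>' \<equiv> \<lambda>i. \<gamma> i - \<alpha> i"
  shows "Qminus_coeff q n \<alpha>' m * mono_op (Qplus_shift n \<alpha>) (Qplus_coeff q n \<alpha>) (Qminus_shift n \<alpha>' m) mu
    = (if mu = Qminus_shift n \<gamma> m then 1 else 0) *
      (\<Prod>i\<in>{1..n}. site_factor q (m i) (\<gamma> i) (\<gamma> (cyc_pred n i)) (\<alpha> (cyc_pred n i)))"
proof -
  define m' where "m' = Qminus_shift n \<alpha>' m"
  define W where "W = (\<Prod>i\<in>{1..n}. site_factor q (m i) (\<gamma> i) (\<gamma> (cyc_pred n i)) (\<alpha> (cyc_pred n i)))"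
  have le: "\<alpha> i \<le> \<gamma> i" for i using assms(1) by (simp add: dominated_def)
  have m'_eq: "m' i = m i + \<alpha>' (cyc_pred n i) - \<alpha>' i" if "i \<in> {1..n}" for i
    using that by (simp add: m'_def Qminus_shift_def)
  have coeff: "Qminus_coeff q n \<alpha>' m * Qplus_coeff q n \<alpha> m' = W"
    unfolding Qminus_coeff_def Qplus_coeff_def W_def prod.distrib[symmetric]
  proof (rule prod.cong[OF refl])
    fix i assume i: "i \<in> {1..n}"
    show "(if \<alpha>' i \<le> m i + \<alpha>' (cyc_pred n i) then 1 else 0) * bstar_coeff q (m i) (\<alpha>' (cyc_pred n i)) *
        ((if \<alpha> i \<le> m' i then 1 else 0) * bstar_coeff q (m' i - \<alpha> i) (\<alpha> (cyc_pred n i)))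
      = site_factor q (m i) (\<gamma> i) (\<gamma> (cyc_pred n i)) (\<alpha> (cyc_pred n i))"
      unfolding m'_eq[OF i] \<alpha>'_def site_factor_def
      using site_factor_merge[OF le[of i], of "m i" "\<gamma> (cyc_pred n i) - \<alpha> (cyc_pred n i)" q "\<alpha> (cyc_pred n i)"]
      by simp
  qed
  have shift: "Qplus_shift n \<alpha> m' = Qminus_shift n \<gamma> m" if "W \<noteq> 0"
  proof
    fix i
    show "Qplus_shift n \<alpha> m' i = Qminus_shift n \<gamma> m i"
    proof (cases "i \<in> {1..n}")
      case True
      then have "site_factor q (m i) (\<gamma> i) (\<gamma> (cyc_pred n i)) (\<alpha> (cyc_pred n i)) \<noteq> 0"
        using that by (simp add: W_def prod_zero_iff)
      then have "\<gamma> i \<le> m i + (\<gamma> (cyc_pred n i) - \<alpha> (cyc_pred n i))"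
        by (simp add: site_factor_def split: if_splits)
      then show ?thesis
        using True le[of i] le[of "cyc_pred n i"] by (simp add: Qplus_shift_def Qminus_shift_def m'_eq \<alpha>'_def)
    qed (auto simp: Qplus_shift_def Qminus_shift_def m'_def)
  qed
  show ?thesis
    unfolding m'_def[symmetric] W_def[symmetric]
    using coeff shift by (cases "W = 0") (auto simp: mono_op_def)
qed

definition comp_size :: "nat \<Rightarrow> (nat \<Rightarrow> nat) \<Rightarrow> nat" where
  "comp_size n \<alpha> = (\<Sum>i=1..n. \<alpha> i)"

lemma Qminus_Qplus_weight:
  fixes q z :: "'a::field" and n :: nat
  assumes q: "\<forall>j\<ge>1. q ^ j \<noteq> 1" and "\<alpha> \<in> dominated \<gamma>"
  defines "k \<equiv> comp_size n \<alpha>"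
  shows "q^(2*k) * Qminus_weight q z n (\<lambda>i. \<gamma> i - \<alpha> i) * ((-1)^k * Qplus_weight q z n \<alpha>)
    = z^(\<gamma> n) * (\<Prod>i\<in>{1..n}. qpair_weight q (\<gamma> i) (\<alpha> i))"
proof -
  define \<alpha>' where "\<alpha>' = (\<lambda>i. \<gamma> i - \<alpha> i)"
  have le: "\<alpha> i \<le> \<gamma> i" for i using assms(2) by (simp add: dominated_def)
  have nz: "(\<Prod>i=1..n. qpoch q (\<alpha> i)) \<noteq> 0" "(\<Prod>i=1..n. qpoch q (\<alpha>' i)) \<noteq> 0"
    using qpoch_nonzero[OF q] by (auto simp: prod_zero_iff)
  have z: "z ^ \<alpha>' n * z ^ \<alpha> n = z ^ \<gamma> n" using le[of n] by (simp add: \<alpha>'_def power_add[symmetric])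
  have "q^(2*k) * (-1)^k = (-(q^2))^k"
    by (simp add: power_mult power_mult_distrib[symmetric])
  then have sign: "q^(2*k) * (-1)^k = (\<Prod>i=1..n. (-(q^2))^(\<alpha> i))"
    by (simp add: k_def comp_size_def power_sum)
  have pair: "(\<Prod>i\<in>{1..n}. qpair_weight q (\<gamma> i) (\<alpha> i))
      = (\<Prod>i=1..n. (-(q^2))^(\<alpha> i)) * (\<Prod>i=1..n. q ^ (\<alpha>' i * (\<alpha>' i + 1)))
        / ((\<Prod>i=1..n. qpoch q (\<alpha> i)) * (\<Prod>i=1..n. qpoch q (\<alpha>' i)))"
    unfolding qpair_weight_def \<alpha>'_def prod_dividef[symmetric] prod.distrib[symmetric] ..
  have "q^(2*k) * Qminus_weight q z n \<alpha>' * ((-1)^k * Qplus_weight q z n \<alpha>)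
      = (q^(2*k) * (-1)^k) * (z ^ \<alpha>' n * z ^ \<alpha> n) * (\<Prod>i=1..n. q ^ (\<alpha>' i * (\<alpha>' i + 1)))
        / ((\<Prod>i=1..n. qpoch q (\<alpha> i)) * (\<Prod>i=1..n. qpoch q (\<alpha>' i)))"
    unfolding Qminus_weight_def Qplus_weight_def using nz by (simp add: field_simps)
  also have "\<dots> = z^(\<gamma> n) * (\<Prod>i\<in>{1..n}. qpair_weight q (\<gamma> i) (\<alpha> i))"
    unfolding sign z pair by (simp add: field_simps)
  finally show ?thesis unfolding \<alpha>'_def .
qed

definition Qplus_Qminus_term ::
    "'a::field \<Rightarrow> 'a \<Rightarrow> nat \<Rightarrow> state \<Rightarrow> state \<Rightarrow> nat \<Rightarrow> (nat \<Rightarrow> nat) \<Rightarrow> (nat \<Rightarrow> nat) \<Rightarrow> 'a" where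
  "Qplus_Qminus_term q z n m mu k \<alpha>' \<alpha> = q^(2*k) * (Qminus_weight q z n \<alpha>' * (Qminus_coeff q n \<alpha>' m *
      ((-1)^k * Qplus_weight q z n \<alpha> * mono_op (Qplus_shift n \<alpha>) (Qplus_coeff q n \<alpha>) (Qminus_shift n \<alpha>' m) mu)))"

lemma comp_Qplus_Qminus_eq_sum:
  fixes q z :: "'a::field"
  assumes n: "1 \<le> n"
  shows "q^(2*k) * comp_op (Qplus n q z k) (Qminus n q z j) m mu
    = (\<Sum>\<alpha>'\<in>comps n j. \<Sum>\<alpha>\<in>comps n k. Qplus_Qminus_term q z n m mu k \<alpha>' \<alpha>)"
proof -
  have "comp_op (Qplus n q z k) (Qminus n q z j) m mu = (\<Sum>\<alpha>'\<in>comps n j. Qminus_weight q z n \<alpha>' *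
      comp_op (Qplus n q z k) (mono_op (Qminus_shift n \<alpha>') (Qminus_coeff q n \<alpha>')) m mu)"
    unfolding Qminus_eq_sum_mono_op[OF n]
    by (rule comp_op_lincomb_right) (auto simp: finite_comps column_finite_mono_op)
  then show ?thesis
    by (simp add: comp_op_mono_op Qplus_eq_sum_mono_op[OF n] Qplus_Qminus_term_def sum_distrib_left)
qed

lemma Qplus_Qminus_term_eq:
  fixes q z :: "'a::field"
  assumes q: "\<forall>j\<ge>1. q ^ j \<noteq> 1" and \<alpha>: "\<alpha> \<in> dominated \<gamma>"
  shows "Qplus_Qminus_term q z n m mu (comp_size n \<alpha>) (\<lambda>i. \<gamma> i - \<alpha> i) \<alpha>
    = (if mu = Qminus_shift n \<gamma> m then 1 else 0) * z^(\<gamma> n) *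
      ((\<Prod>i\<in>{1..n}. qpair_weight q (\<gamma> i) (\<alpha> i)) *
       (\<Prod>i\<in>{1..n}. site_factor q (m i) (\<gamma> i) (\<gamma> (cyc_pred n i)) (\<alpha> (cyc_pred n i))))"
  using Qminus_Qplus_weight[OF q \<alpha>, where z=z and n=n] Qminus_then_Qplus_monomial[OF \<alpha>, where q=q and n=n and m=m and mu=mu]
  unfolding Qplus_Qminus_term_def by (simp add: ac_simps)

text \<open>\<open>\<alpha> i\<close> occurs only in the weight at site \<open>i\<close> and in the site factor at \<open>cyc_succ n i\<close>;
when the latter site has \<open>\<gamma> = 0\<close>, that factor does not depend on \<open>\<alpha> i\<close>.\<close>

lemma weights_factor_at_site:
  fixes q :: "'a::field" and m :: state
  assumes i: "i \<in> {1..n}" and \<gamma>: "\<gamma> (cyc_succ n i) = 0"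
  obtains R where "\<And>\<alpha>. \<alpha> \<in> dominated \<gamma> \<Longrightarrow>
      (\<Prod>j\<in>{1..n}. qpair_weight q (\<gamma> j) (\<alpha> j)) *
      (\<Prod>j\<in>{1..n}. site_factor q (m j) (\<gamma> j) (\<gamma> (cyc_pred n j)) (\<alpha> (cyc_pred n j)))
    = qpair_weight q (\<gamma> i) (\<alpha> i) * R (\<alpha>(i := 0))"
proof -
  define s where "s = cyc_succ n i"
  have s: "s \<in> {1..n}" "cyc_pred n s = i"
    unfolding s_def using i by (intro cyc_succ_in cyc_pred_cyc_succ; simp)+
  define R where "R \<beta> = (\<Prod>j\<in>{1..n}-{i}. qpair_weight q (\<gamma> j) (\<beta> j)) * bstar_coeff q (m s) (\<gamma> i) *
      (\<Prod>j\<in>{1..n}-{s}. site_factor q (m j) (\<gamma> j) (\<gamma> (cyc_pred n j)) (\<beta> (cyc_pred n j)))" for \<beta>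
  have "(\<Prod>j\<in>{1..n}. qpair_weight q (\<gamma> j) (\<alpha> j)) *
      (\<Prod>j\<in>{1..n}. site_factor q (m j) (\<gamma> j) (\<gamma> (cyc_pred n j)) (\<alpha> (cyc_pred n j)))
    = qpair_weight q (\<gamma> i) (\<alpha> i) * R (\<alpha>(i := 0))" if \<alpha>: "\<alpha> \<in> dominated \<gamma>" for \<alpha>
  proof -
    have "(\<Prod>j\<in>{1..n}. qpair_weight q (\<gamma> j) (\<alpha> j))
        = qpair_weight q (\<gamma> i) (\<alpha> i) * (\<Prod>j\<in>{1..n}-{i}. qpair_weight q (\<gamma> j) ((\<alpha>(i := 0)) j))"
      by (subst prod.remove[OF _ i]) (auto intro!: prod.cong)
    moreover have "(\<Prod>j\<in>{1..n}. site_factor q (m j) (\<gamma> j) (\<gamma> (cyc_pred n j)) (\<alpha> (cyc_pred n j)))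
        = bstar_coeff q (m s) (\<gamma> i) *
          (\<Prod>j\<in>{1..n}-{s}. site_factor q (m j) (\<gamma> j) (\<gamma> (cyc_pred n j)) ((\<alpha>(i := 0)) (cyc_pred n j)))"
    proof -
      have "site_factor q (m s) (\<gamma> s) (\<gamma> (cyc_pred n s)) (\<alpha> (cyc_pred n s)) = bstar_coeff q (m s) (\<gamma> i)"
        using \<alpha> \<gamma> s by (simp add: site_factor_empty_site s_def dominated_def)
      moreover have "cyc_pred n j \<noteq> i" if "j \<in> {1..n}-{s}" for j
        using that cyc_pred_eq_iff[of j n i] i by (auto simp: s_def)
      ultimately show ?thesis by (subst prod.remove[OF _ s(1)]) (auto intro!: prod.cong)
    qed
    ultimately show ?thesis by (simp add: R_def mult_ac)
  qed
  then show ?thesis by (rule that)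
qed

lemma sum_Qplus_Qminus_term_dominated_eq_0:
  fixes q z :: "'a::field"
  assumes q: "\<forall>j\<ge>1. q ^ j \<noteq> 1"
    and \<gamma>: "\<gamma> \<in> comps n r" and r: "1 \<le> r" and rn: "r < n"
  shows "(\<Sum>\<alpha>\<in>dominated \<gamma>. Qplus_Qminus_term q z n m mu (comp_size n \<alpha>) (\<lambda>i. \<gamma> i - \<alpha> i) \<alpha>) = 0"
proof -
  obtain i where i: "i \<in> {1..n}" "1 \<le> \<gamma> i" "\<gamma> (cyc_succ n i) = 0"
    using comps_nonzero_before_zero[OF \<gamma> r rn] by auto
  obtain R where R: "\<And>\<alpha>. \<alpha> \<in> dominated \<gamma> \<Longrightarrow>
      (\<Prod>j\<in>{1..n}. qpair_weight q (\<gamma> j) (\<alpha> j)) *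
      (\<Prod>j\<in>{1..n}. site_factor q (m j) (\<gamma> j) (\<gamma> (cyc_pred n j)) (\<alpha> (cyc_pred n j)))
    = qpair_weight q (\<gamma> i) (\<alpha> i) * R (\<alpha>(i := 0))"
    using weights_factor_at_site[where \<gamma>=\<gamma>, OF i(1,3)] by blast
  define c where "c = (if mu = Qminus_shift n \<gamma> m then 1 else 0) * z^(\<gamma> n)"
  have "(\<Sum>\<alpha>\<in>dominated \<gamma>. Qplus_Qminus_term q z n m mu (comp_size n \<alpha>) (\<lambda>i. \<gamma> i - \<alpha> i) \<alpha>)
      = c * (\<Sum>\<alpha>\<in>dominated \<gamma>. qpair_weight q (\<gamma> i) (\<alpha> i) * R (\<alpha>(i := 0)))"
    unfolding sum_distrib_left
  proof (rule sum.cong[OF refl])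
    fix \<alpha> assume "\<alpha> \<in> dominated \<gamma>"
    then show "Qplus_Qminus_term q z n m mu (comp_size n \<alpha>) (\<lambda>i. \<gamma> i - \<alpha> i) \<alpha>
        = c * (qpair_weight q (\<gamma> i) (\<alpha> i) * R (\<alpha>(i := 0)))"
      unfolding Qplus_Qminus_term_eq[OF q \<open>\<alpha> \<in> dominated \<gamma>\<close>] R[OF \<open>\<alpha> \<in> dominated \<gamma>\<close>] c_def
      by (simp only: mult.assoc)
  qed
  also have "\<dots> = 0"
    by (simp add: sum_dominated_split sum_qpair_weight_eq_0[OF q i(2)])
  finally show ?thesis .
qed

lemma sum_comps_convolution:
  "(\<Sum>k\<in>{0..r}. \<Sum>\<alpha>'\<in>comps n (r-k). \<Sum>\<alpha>\<in>comps n k. F k \<alpha>' \<alpha>)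
    = (\<Sum>\<gamma>\<in>comps n r. \<Sum>\<alpha>\<in>dominated \<gamma>. F (comp_size n \<alpha>) (\<lambda>i. \<gamma> i - \<alpha> i) \<alpha>)"
proof -
  have "(\<Sum>k\<in>{0..r}. \<Sum>\<alpha>'\<in>comps n (r-k). \<Sum>\<alpha>\<in>comps n k. F k \<alpha>' \<alpha>)
      = (\<Sum>(k, \<alpha>', \<alpha>)\<in>Sigma {0..r} (\<lambda>k. comps n (r-k) \<times> comps n k). F k \<alpha>' \<alpha>)"
    by (simp add: sum.Sigma finite_comps sum.cartesian_product split_def)
  also have "\<dots> = (\<Sum>(\<gamma>, \<alpha>)\<in>Sigma (comps n r) dominated. F (comp_size n \<alpha>) (\<lambda>i. \<gamma> i - \<alpha> i) \<alpha>)"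
  proof (rule sum.reindex_bij_witness[where j="\<lambda>(k, \<alpha>', \<alpha>). (\<lambda>i. \<alpha>' i + \<alpha> i, \<alpha>)"
        and i="\<lambda>(\<gamma>, \<alpha>). (comp_size n \<alpha>, \<lambda>i. \<gamma> i - \<alpha> i, \<alpha>)"])
    fix x assume "x \<in> Sigma {0..r} (\<lambda>k. comps n (r-k) \<times> comps n k)"
    then obtain k \<alpha>' \<alpha> where x: "x = (k, \<alpha>', \<alpha>)" "k \<le> r" "\<alpha>' \<in> comps n (r-k)" "\<alpha> \<in> comps n k" by auto
    have "comp_size n \<alpha> = k" using comps_sum[OF x(4)] by (simp add: comp_size_def)
    moreover have "(\<lambda>i. \<alpha>' i + \<alpha> i) \<in> comps n r"
      using comps_outside[OF x(3)] comps_outside[OF x(4)] comps_sum[OF x(3)] comps_sum[OF x(4)] x(2)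
      by (intro comps_intro) (auto simp: sum.distrib)
    ultimately show "(case (case x of (k, \<alpha>', \<alpha>) \<Rightarrow> (\<lambda>i. \<alpha>' i + \<alpha> i, \<alpha>)) of
          (\<gamma>, \<alpha>) \<Rightarrow> (comp_size n \<alpha>, \<lambda>i. \<gamma> i - \<alpha> i, \<alpha>)) = x"
      and "(case x of (k, \<alpha>', \<alpha>) \<Rightarrow> (\<lambda>i. \<alpha>' i + \<alpha> i, \<alpha>)) \<in> Sigma (comps n r) dominated"
      and "(case case x of (k, \<alpha>', \<alpha>) \<Rightarrow> (\<lambda>i. \<alpha>' i + \<alpha> i, \<alpha>) of
          (\<gamma>, \<alpha>) \<Rightarrow> F (comp_size n \<alpha>) (\<lambda>i. \<gamma> i - \<alpha> i) \<alpha>) = (case x of (k, \<alpha>', \<alpha>) \<Rightarrow> F k \<alpha>' \<alpha>)"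
      using x by (auto simp: dominated_def)
  next
    fix y assume "y \<in> Sigma (comps n r) dominated"
    then obtain \<gamma> \<alpha> where y: "y = (\<gamma>, \<alpha>)" "\<gamma> \<in> comps n r" "\<alpha> \<in> dominated \<gamma>" by auto
    have le: "\<alpha> i \<le> \<gamma> i" for i using y(3) by (simp add: dominated_def)
    have "comp_size n \<alpha> \<le> r" using comps_sum[OF y(2)] le by (auto simp: comp_size_def intro: sum_mono order.trans[rotated])
    moreover have "(\<lambda>i. \<gamma> i - \<alpha> i) \<in> comps n (r - comp_size n \<alpha>)"
      using comps_outside[OF y(2)] comps_sum[OF y(2)]
      by (intro comps_intro) (auto simp: sum_subtractf_nat le comp_size_def)
    moreover have "\<alpha> \<in> comps n (comp_size n \<alpha>)"
    proof (rule comps_intro)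
      show "\<alpha> i = 0" if "i = 0 \<or> n < i" for i using le[of i] comps_outside[OF y(2) that] by simp
    qed (simp add: comp_size_def)
    ultimately show "(case (case y of (\<gamma>, \<alpha>) \<Rightarrow> (comp_size n \<alpha>, \<lambda>i. \<gamma> i - \<alpha> i, \<alpha>)) of
          (k, \<alpha>', \<alpha>) \<Rightarrow> (\<lambda>i. \<alpha>' i + \<alpha> i, \<alpha>)) = y"
      and "(case y of (\<gamma>, \<alpha>) \<Rightarrow> (comp_size n \<alpha>, \<lambda>i. \<gamma> i - \<alpha> i, \<alpha>)) \<in> Sigma {0..r} (\<lambda>k. comps n (r-k) \<times> comps n k)"
      using y le by (auto simp: fun_eq_iff)
  qed
  also have "\<dots> = (\<Sum>\<gamma>\<in>comps n r. \<Sum>\<alpha>\<in>dominated \<gamma>. F (comp_size n \<alpha>) (\<lambda>i. \<gamma> i - \<alpha> i) \<alpha>)"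
    by (subst sum.Sigma) (auto simp: finite_comps finite_dominated_comp)
  finally show ?thesis .
qed

lemma twisted_conv_Qplus_Qminus_eq_0:
  fixes q z :: "'a::field"
  assumes n: "1 \<le> n" and q: "\<forall>j\<ge>1. q ^ j \<noteq> 1" and r: "1 \<le> r" "r < n"
  shows "(\<Sum>k\<in>{0..r}. q^(2*k) * comp_op (Qplus n q z k) (Qminus n q z (r-k)) m mu) = 0"
  by (simp add: comp_Qplus_Qminus_eq_sum[OF n] sum_comps_convolution
      sum_Qplus_Qminus_term_dominated_eq_0[OF q _ r])

subsection \<open>The coefficients \<open>D\<^sub>r\<close> for \<open>r < n\<close>\<close>

lemma Dcoef_eq_scaled_Qminus:
  fixes q z :: "'a::field"
  assumes n: "1 \<le> n" and q0: "q \<noteq> 0" and q: "\<forall>j\<ge>1. q ^ j \<noteq> 1" and "r < n"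
  shows "Dcoef n q z r = scale_op (inverse (q ^ (2 * r))) (Qminus n q z r)"
  using \<open>r < n\<close>
proof (induction r rule: less_induct)
  case (less r)
  show ?case
  proof (cases "r = 0")
    case False
    then have r: "1 \<le> r" by simp
    have rescale: "comp_op (Qplus n q z k) (Dcoef n q z (r-k)) m mu
        = inverse (q ^ (2 * r)) * (q^(2*k) * comp_op (Qplus n q z k) (Qminus n q z (r-k)) m mu)"
      if "k \<in> {1..r}" for k m mu
    proof -
      have "2 * r = 2 * (r-k) + 2 * k" using that by auto
      then have "q ^ (2 * r) = q ^ (2 * (r-k)) * q^(2*k)" by (metis power_add)
      then have "inverse (q ^ (2 * (r-k))) = inverse (q ^ (2 * r)) * q^(2*k)" using q0 by (simp add: field_simps)
      then show ?thesis using less.IH[of "r-k"] less.prems that by (simp add: comp_op_scale_right)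
    qed
    have Q0: "comp_op (Qplus n q z 0) (Qminus n q z r) = Qminus n q z r"
      by (simp add: Qplus_0[OF n] comp_op_id_left column_finite_Qminus[OF n])
    show ?thesis
    proof (intro ext)
      fix m mu
      have "(\<Sum>k\<in>{1..r}. q^(2*k) * comp_op (Qplus n q z k) (Qminus n q z (r-k)) m mu) = - Qminus n q z r m mu"
        using twisted_conv_Qplus_Qminus_eq_0[OF n q r less.prems, of z m mu] Q0
        by (simp add: sum.atLeast_Suc_atMost[of 0] eq_neg_iff_add_eq_0 add.commute)
      then show "Dcoef n q z r m mu = scale_op (inverse (q ^ (2 * r))) (Qminus n q z r) m mu"
        by (simp add: Dcoef_rec[OF n r] rescale scale_op_def sum_distrib_left[symmetric])
    qed
  qed (simp add: Dcoef_0 Qminus_0[OF n] scale_op_def)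
qed

theorem mainTheorem8:
  fixes q z :: "'a::field" and n :: nat
  assumes "n \<ge> 1"
    and "q \<noteq> 0"
    and "\<forall>j\<ge>1. q ^ j \<noteq> 1"
  shows "(\<forall>r. \<forall>m\<in>fock n.
            conv_op (Qplus n q z) (Dcoef n q z) r m = (if r = 0 then id_op else zero_op) m \<and>
            conv_op (Dcoef n q z) (Qplus n q z) r m = (if r = 0 then id_op else zero_op) m)
       \<and> (\<forall>r<n. \<forall>m\<in>fock n.
            Dcoef n q z r m = scale_op (inverse (q ^ (2 * r))) (Qminus n q z r) m)"
  by (simp add: Qplus_Dcoef_inverse[OF assms(1)] Dcoef_Qplus_inverse[OF assms(1)]
      Dcoef_eq_scaled_Qminus[OF assms])

end
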